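(* Under the assumptions of Lemma 3.14 (i.e. $r,s\ge0$, $\Delta=(v_1,\dots,v_n)$ vectors in $\mathbb{Z}^2\setminus\{0\}$, $F\subset\{1,\dots,n\}$ with $r+2s+|F|=|\Delta|-1$, and $\mathcal{P}$ a collection of conditions in general position for $\mathrm{ev}_F$), the unoriented and oriented refined broccoli invariants agree: $$N^{urB}_{(r,s)}(y,\Delta,F,\mathcal{P})=N^{rB}_{(r,s)}(y,\Delta,F,\mathcal{P}).$$
   Context: Curves. An $(r,s)$-marked curve of degree $\Delta$ is $C=(\Gamma,h,x_1,\dots,x_{r+s})$ with $\Gamma$ a metric graph whose components are trees, $h:\Gamma\to\mathbb{R}^2$ continuous, affine with integral direction vectors on edges, balanced at vertices; $x_1,\dots,x_r$ (real) and $x_{r+1},\dots,x_{r+s}$ (complex) are contracted unbounded edges (markings), the other unbounded edges $y_1,\dots,y_n$ (labeled ends) have outward direction vectors $\Delta=(v(y_1),\dots,v(y_n))$. Weight $w(e)$ = gcd of coordinates of direction vector. Mikhalkin multiplicity of a vertex with exactly three non-contracted edges of direction vectors $u,v,w$: $a=|\det(u,v)|$. $\mathcal{M}_{(r,s)}(\Delta)$ is the polyhedral complex of connected such curves. An oriented curve carries orientations of non-contracted edges; $F=\{i: y_i\text{ inward}\}$ (fixed ends); $\mathcal{M}^{or}_{(r,s)}(\Delta,F)$ the connected oriented curves with fixed ends $F$. $\mathrm{ev}_F(C)=(h(x_1),\dots,h(x_{r+s}),(h(y_i))_{i\in F})$; general position means avoiding images of cells whose image has dimension $<2(r+s)+|F|$.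 $G(\Delta,F)$: permutations of $\{1,\dots,n\}$ fixing $F$ pointwise and preserving $v(y_i)$. Oriented refined broccoli curve: vertices of types (I) real marking, two outgoing non-contracted edges, $m_V(y)=1$; (II) unmarked 3-valent, two in one out, $m_V(y)=\frac{y^{a/2}-y^{-a/2}}{y^{1/2}-y^{-1/2}}$; (III) complex marking, three outgoing non-contracted edges, $m_V(y)=\frac{y^{a/2}+y^{-a/2}}{y^{1/2}+y^{-1/2}}$. Unoriented refined broccoli curve: vertices of types (I') 3-valent with real marking, $m_V(y)=1$; (II') 3-valent unmarked, $m_V(y)=\frac{y^{a/2}-y^{-a/2}}{y^{1/2}-y^{-1/2}}$; (III') 4-valent with complex marking, $m_V(y)=\frac{y^{a/2}+y^{-a/2}}{y^{1/2}+y^{-1/2}}$. End factors (relative to $F$): $m_{y_i}(y)=\frac{y^{w(y_i)/2}+(-1)^{w(y_i)}y^{-w(y_i)/2}}{y^{1/2}+(-1)^{w(y_i)}y^{-1/2}}$ for $i\in F$ and $m_{y_i}(y)=\frac{y^{w(y_i)/2}-(-1)^{w(y_i)}y^{-w(y_i)/2}}{w(y_i)(y^{1/2}-(-1)^{w(y_i)}y^{-1/2})}$ for $i\notin F$. The multiplicity of a (oriented or unoriented) refined broccoli curve is $m_C(y)=\prod_i m_{y_i}(y)\prod_V m_V(y)$. $N^{rB}_{(r,s)}(y,\Delta,F,\mathcal P)=\frac{1}{|G(\Delta,F)|}\sum m_C(y)$ over oriented refined broccoli curves in $\mathcal{M}^{or}_{(r,s)}(\Delta,F)$ with $\mathrm{ev}_F(C)=\mathcal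 P$; $N^{urB}_{(r,s)}(y,\Delta,F,\mathcal P)=\frac{1}{|G(\Delta,F)|}\sum m_C(y)$ over unoriented refined broccoli curves in $\mathcal{M}_{(r,s)}(\Delta)$ with $\mathrm{ev}_F(C)=\mathcal P$. *)

theory Defs
  imports "HOL-Analysis.Analysis" "HOL-Combinatorics.Permutations"
begin

section \<open>Parametrized (r,s)-marked plane tropical curves (combinatorial encoding)\<close>

text \<open>Conventions: ends y_0,...,y_{n-1} (n = length Delta), markings x_0,...,x_{r+s-1};
  x_j is real for j < r and complex for r <= j < r+s.  Vertices of the tree Gamma are
  0,...,nV-1.  bE is the (symmetric) set of bounded edges, bdir C u w the direction vector
  of the bounded edge from u to w (so that h(w) - h(u) = length * bdir C u w),
  vpos C v = h(v), endv C i the vertex where the end y_i is attached,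
  markv C j the vertex where the contracted marking x_j is attached.\<close>

record pcurve =
  nV    :: nat
  bE    :: "(nat \<times> nat) set"
  bdir  :: "nat \<Rightarrow> nat \<Rightarrow> int \<times> int"
  vpos  :: "nat \<Rightarrow> real \<times> real"
  endv  :: "nat \<Rightarrow> nat"
  markv :: "nat \<Rightarrow> nat"

definition det2 :: "int \<times> int \<Rightarrow> int \<times> int \<Rightarrow> int" where
  "det2 u v = fst u * snd v - snd u * fst v"

definition wt :: "int \<times> int \<Rightarrow> nat" where
  "wt v = nat (gcd (fst v) (snd v))"

text \<open>flags at a vertex: the non-contracted edges adjacent to v (bounded edges and ends)\<close>
definition flags :: "(int \<times> int) list \<Rightarrow> pcurve \<Rightarrow> nat \<Rightarrow> (nat + nat) set" where
  "flags \<Delta> C v = Inl ` {w. (v, w) \<in> bE C} \<union> Inr ` {i. i < length \<Delta> \<and> endv C i = v}"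

definition odir :: "(int \<times> int) list \<Rightarrow> pcurve \<Rightarrow> nat \<Rightarrow> nat + nat \<Rightarrow> int \<times> int" where
  "odir \<Delta> C v f = (case f of Inl w \<Rightarrow> bdir C v w | Inr i \<Rightarrow> \<Delta> ! i)"

definition marks :: "nat \<Rightarrow> nat \<Rightarrow> pcurve \<Rightarrow> nat \<Rightarrow> nat set" where
  "marks r s C v = {j. j < r + s \<and> markv C j = v}"

text \<open>C is an element of M_(r,s)(Delta): connected (tree), balanced, integral directions,
  positive edge lengths, abstract tropical curve (all vertices at least 3-valent).\<close>
definition is_curve :: "nat \<Rightarrow> nat \<Rightarrow> (int \<times> int) list \<Rightarrow> pcurve \<Rightarrow> bool" where
  "is_curve r s \<Delta> C \<longleftrightarrow>
     0 < nV C \<and>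
     bE C \<subseteq> {..<nV C} \<times> {..<nV C} \<and> sym (bE C) \<and> (\<forall>u. (u, u) \<notin> bE C) \<and>
     (\<forall>u w. (u, w) \<in> bE C \<longrightarrow>
        bdir C u w \<noteq> (0, 0) \<and>
        bdir C w u = (- fst (bdir C u w), - snd (bdir C u w)) \<and>
        (\<exists>l::real. l > 0 \<and>
           fst (vpos C w) - fst (vpos C u) = l * of_int (fst (bdir C u w)) \<and>
           snd (vpos C w) - snd (vpos C u) = l * of_int (snd (bdir C u w)))) \<and>
     (\<forall>u < nV C. \<forall>w < nV C. (u, w) \<in> (bE C)\<^sup>*) \<and>
     card (bE C) = 2 * (nV C - 1) \<and>
     (\<forall>i < length \<Delta>. endv C i < nV C) \<and>
     (\<forall>j < r + s. markv C j < nV C) \<and>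
     (\<forall>v < nV C. (\<Sum>f\<in>flags \<Delta> C v. fst (odir \<Delta> C v f)) = 0 \<and>
                 (\<Sum>f\<in>flags \<Delta> C v. snd (odir \<Delta> C v f)) = 0) \<and>
     (\<forall>v < nV C. card (flags \<Delta> C v) + card (marks r s C v) \<ge> 3)"

text \<open>Mikhalkin multiplicity |det(u,v)| of two of the (three) non-contracted edges at v\<close>
definition mikh :: "(int \<times> int) list \<Rightarrow> pcurve \<Rightarrow> nat \<Rightarrow> nat" where
  "mikh \<Delta> C v = Max {nat \<bar>det2 (odir \<Delta> C v f) (odir \<Delta> C v g)\<bar> | f g.
                        f \<in> flags \<Delta> C v \<and> g \<in> flags \<Delta> C v \<and> f \<noteq> g}"

section \<open>Evaluation map and general position\<close>

text \<open>A collection of conditions P: points (fst P j) for the markings x_j, j < r+s, and, for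
  i in F, the value of the image of y_i in R^2/<v_i>, identified with R via p |-> det(v_i,p).\<close>
type_synonym conds = "(nat \<Rightarrow> real \<times> real) \<times> (nat \<Rightarrow> real)"

definition lineval :: "int \<times> int \<Rightarrow> real \<times> real \<Rightarrow> real" where
  "lineval v p = of_int (fst v) * snd p - of_int (snd v) * fst p"

definition ev_eq :: "nat \<Rightarrow> nat \<Rightarrow> (int \<times> int) list \<Rightarrow> nat set \<Rightarrow> pcurve \<Rightarrow> conds \<Rightarrow> bool" where
  "ev_eq r s \<Delta> F C P \<longleftrightarrow>
     (\<forall>j < r + s. vpos C (markv C j) = fst P j) \<and>
     (\<forall>i \<in> F. lineval (\<Delta> ! i) (vpos C (endv C i)) = snd P i)"

text \<open>ev_F(C) as a coordinate vector in R^(2(r+s)+|F|) (padded with zeros)\<close>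
definition evvec :: "nat \<Rightarrow> nat \<Rightarrow> (int \<times> int) list \<Rightarrow> nat set \<Rightarrow> pcurve \<Rightarrow> nat \<Rightarrow> real" where
  "evvec r s \<Delta> F C t =
     (if t < 2 * (r + s) then
        (if even t then fst (vpos C (markv C (t div 2))) else snd (vpos C (markv C (t div 2))))
      else if t - 2 * (r + s) \<in> F then
        lineval (\<Delta> ! (t - 2 * (r + s))) (vpos C (endv C (t - 2 * (r + s))))
      else 0)"

text \<open>the cell of M_(r,s)(Delta) containing C: all curves of the same combinatorial type\<close>
definition cell :: "nat \<Rightarrow> nat \<Rightarrow> (int \<times> int) list \<Rightarrow> pcurve \<Rightarrow> pcurve set" where
  "cell r s \<Delta> C = {C'. is_curve r s \<Delta> C' \<and> nV C' = nV C \<and> bE C' = bE C \<and>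
      (\<forall>(u, w) \<in> bE C. bdir C' u w = bdir C u w) \<and>
      (\<forall>i < length \<Delta>. endv C' i = endv C i) \<and> (\<forall>j < r + s. markv C' j = markv C j)}"

text \<open>a set S of real vectors has affine dimension at least d\<close>
definition dim_ge :: "nat \<Rightarrow> (nat \<Rightarrow> real) set \<Rightarrow> bool" where
  "dim_ge d S \<longleftrightarrow> (\<exists>p. (\<forall>i \<le> d. p i \<in> S) \<and>
      (\<forall>c::nat \<Rightarrow> real. (\<forall>t. (\<Sum>i\<in>{1..d}. c i * (p i t - p 0 t)) = 0) \<longrightarrow>
                       (\<forall>i \<in> {1..d}. c i = 0)))"

text \<open>P is in general position for ev_F: P avoids ev_F(cell) for every cell whose image has
  dimension < 2(r+s)+|F|.\<close>
definition gen_pos :: "nat \<Rightarrow> nat \<Rightarrow> (int \<times> int) list \<Rightarrow> nat set \<Rightarrow> conds \<Rightarrow> bool" where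
  "gen_pos r s \<Delta> F P \<longleftrightarrow>
     (\<forall>C. is_curve r s \<Delta> C \<and> ev_eq r s \<Delta> F C P \<longrightarrow>
          dim_ge (2 * (r + s) + card F) (evvec r s \<Delta> F ` cell r s \<Delta> C))"

section \<open>Multiplicities\<close>

definition qminus :: "nat \<Rightarrow> real \<Rightarrow> real" where
  "qminus a y = (y powr (real a / 2) - y powr (- (real a / 2))) / (y powr (1/2) - y powr (- (1/2)))"

definition qplus :: "nat \<Rightarrow> real \<Rightarrow> real" where
  "qplus a y = (y powr (real a / 2) + y powr (- (real a / 2))) / (y powr (1/2) + y powr (- (1/2)))"

definition endfac :: "(int \<times> int) list \<Rightarrow> nat set \<Rightarrow> nat \<Rightarrow> real \<Rightarrow> real" where
  "endfac \<Delta> F i y = (let w = wt (\<Delta> ! i) in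
     if i \<in> F then
       (y powr (real w / 2) + (-1) ^ w * y powr (- (real w / 2))) /
       (y powr (1/2) + (-1) ^ w * y powr (- (1/2)))
     else
       (y powr (real w / 2) - (-1) ^ w * y powr (- (real w / 2))) /
       (real w * (y powr (1/2) - (-1) ^ w * y powr (- (1/2)))))"

definition typeI' :: "nat \<Rightarrow> nat \<Rightarrow> (int \<times> int) list \<Rightarrow> pcurve \<Rightarrow> nat \<Rightarrow> bool" where
  "typeI' r s \<Delta> C v \<longleftrightarrow> card (flags \<Delta> C v) = 2 \<and> (\<exists>j < r. marks r s C v = {j})"

definition typeII' :: "nat \<Rightarrow> nat \<Rightarrow> (int \<times> int) list \<Rightarrow> pcurve \<Rightarrow> nat \<Rightarrow> bool" where
  "typeII' r s \<Delta> C v \<longleftrightarrow> card (flags \<Delta> C v) = 3 \<and> marks r s C v = {}"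

definition typeIII' :: "nat \<Rightarrow> nat \<Rightarrow> (int \<times> int) list \<Rightarrow> pcurve \<Rightarrow> nat \<Rightarrow> bool" where
  "typeIII' r s \<Delta> C v \<longleftrightarrow> card (flags \<Delta> C v) = 3 \<and>
     (\<exists>j. r \<le> j \<and> j < r + s \<and> marks r s C v = {j})"

definition unor_broccoli :: "nat \<Rightarrow> nat \<Rightarrow> (int \<times> int) list \<Rightarrow> pcurve \<Rightarrow> bool" where
  "unor_broccoli r s \<Delta> C \<longleftrightarrow> is_curve r s \<Delta> C \<and>
     (\<forall>v < nV C. typeI' r s \<Delta> C v \<or> typeII' r s \<Delta> C v \<or> typeIII' r s \<Delta> C v)"

definition mV_un :: "nat \<Rightarrow> nat \<Rightarrow> (int \<times> int) list \<Rightarrow> pcurve \<Rightarrow> real \<Rightarrow> nat \<Rightarrow> real" where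
  "mV_un r s \<Delta> C y v =
     (if typeI' r s \<Delta> C v then 1
      else if typeII' r s \<Delta> C v then qminus (mikh \<Delta> C v) y
      else qplus (mikh \<Delta> C v) y)"

definition mult_un :: "nat \<Rightarrow> nat \<Rightarrow> (int \<times> int) list \<Rightarrow> nat set \<Rightarrow> real \<Rightarrow> pcurve \<Rightarrow> real" where
  "mult_un r s \<Delta> F y C =
     (\<Prod>i < length \<Delta>. endfac \<Delta> F i y) * (\<Prod>v < nV C. mV_un r s \<Delta> C y v)"

text \<open>An orientation of the bounded edges: ori u w means the edge {u,w} is oriented from u to w.
  Ends y_i are oriented inward iff i \<in> F.\<close>
definition valid_ori :: "pcurve \<Rightarrow> (nat \<Rightarrow> nat \<Rightarrow> bool) \<Rightarrow> bool" where
  "valid_ori C ori \<longleftrightarrow> (\<forall>u w. ori u w \<longrightarrow> (u, w) \<in> bE C) \<and>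
     (\<forall>u w. (u, w) \<in> bE C \<longrightarrow> (ori u w \<longleftrightarrow> \<not> ori w u))"

definition outgoing :: "nat set \<Rightarrow> (nat \<Rightarrow> nat \<Rightarrow> bool) \<Rightarrow> nat \<Rightarrow> nat + nat \<Rightarrow> bool" where
  "outgoing F ori v f = (case f of Inl w \<Rightarrow> ori v w | Inr i \<Rightarrow> i \<notin> F)"

definition ins :: "(int \<times> int) list \<Rightarrow> nat set \<Rightarrow> pcurve \<Rightarrow> (nat \<Rightarrow> nat \<Rightarrow> bool) \<Rightarrow> nat \<Rightarrow> (nat + nat) set" where
  "ins \<Delta> F C ori v = {f \<in> flags \<Delta> C v. \<not> outgoing F ori v f}"

definition typeI :: "nat \<Rightarrow> nat \<Rightarrow> (int \<times> int) list \<Rightarrow> nat set \<Rightarrow> pcurve \<Rightarrow> (nat \<Rightarrow> nat \<Rightarrow> bool) \<Rightarrow> nat \<Rightarrow> bool" where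
  "typeI r s \<Delta> F C ori v \<longleftrightarrow> card (flags \<Delta> C v) = 2 \<and> ins \<Delta> F C ori v = {} \<and>
     (\<exists>j < r. marks r s C v = {j})"

definition typeII :: "nat \<Rightarrow> nat \<Rightarrow> (int \<times> int) list \<Rightarrow> nat set \<Rightarrow> pcurve \<Rightarrow> (nat \<Rightarrow> nat \<Rightarrow> bool) \<Rightarrow> nat \<Rightarrow> bool" where
  "typeII r s \<Delta> F C ori v \<longleftrightarrow> card (flags \<Delta> C v) = 3 \<and> card (ins \<Delta> F C ori v) = 2 \<and>
     marks r s C v = {}"

definition typeIII :: "nat \<Rightarrow> nat \<Rightarrow> (int \<times> int) list \<Rightarrow> nat set \<Rightarrow> pcurve \<Rightarrow> (nat \<Rightarrow> nat \<Rightarrow> bool) \<Rightarrow> nat \<Rightarrow> bool" where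
  "typeIII r s \<Delta> F C ori v \<longleftrightarrow> card (flags \<Delta> C v) = 3 \<and> ins \<Delta> F C ori v = {} \<and>
     (\<exists>j. r \<le> j \<and> j < r + s \<and> marks r s C v = {j})"

definition or_broccoli :: "nat \<Rightarrow> nat \<Rightarrow> (int \<times> int) list \<Rightarrow> nat set \<Rightarrow> pcurve \<times> (nat \<Rightarrow> nat \<Rightarrow> bool) \<Rightarrow> bool" where
  "or_broccoli r s \<Delta> F Co \<longleftrightarrow> (case Co of (C, ori) \<Rightarrow>
     is_curve r s \<Delta> C \<and> valid_ori C ori \<and>
     (\<forall>v < nV C. typeI r s \<Delta> F C ori v \<or> typeII r s \<Delta> F C ori v \<or> typeIII r s \<Delta> F C ori v))"

definition mV_or :: "nat \<Rightarrow> nat \<Rightarrow> (int \<times> int) list \<Rightarrow> nat set \<Rightarrow> pcurve \<Rightarrow> (nat \<Rightarrow> nat \<Rightarrow> bool) \<Rightarrow> real \<Rightarrow> nat \<Rightarrow> real" where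
  "mV_or r s \<Delta> F C ori y v =
     (if typeI r s \<Delta> F C ori v then 1
      else if typeII r s \<Delta> F C ori v then qminus (mikh \<Delta> C v) y
      else qplus (mikh \<Delta> C v) y)"

definition mult_or :: "nat \<Rightarrow> nat \<Rightarrow> (int \<times> int) list \<Rightarrow> nat set \<Rightarrow> real \<Rightarrow> pcurve \<times> (nat \<Rightarrow> nat \<Rightarrow> bool) \<Rightarrow> real" where
  "mult_or r s \<Delta> F y Co = (case Co of (C, ori) \<Rightarrow>
     (\<Prod>i < length \<Delta>. endfac \<Delta> F i y) * (\<Prod>v < nV C. mV_or r s \<Delta> F C ori y v))"

section \<open>Isomorphism of (labelled, oriented) curves and the counts\<close>

definition curve_iso :: "nat \<Rightarrow> nat \<Rightarrow> (int \<times> int) list \<Rightarrow> pcurve \<Rightarrow> pcurve \<Rightarrow> (nat \<Rightarrow> nat) \<Rightarrow> bool" where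
  "curve_iso r s \<Delta> C C' \<sigma> \<longleftrightarrow>
     bij_betw \<sigma> {..<nV C} {..<nV C'} \<and>
     bE C' = (\<lambda>(u, w). (\<sigma> u, \<sigma> w)) ` bE C \<and>
     (\<forall>(u, w) \<in> bE C. bdir C' (\<sigma> u) (\<sigma> w) = bdir C u w) \<and>
     (\<forall>v < nV C. vpos C' (\<sigma> v) = vpos C v) \<and>
     (\<forall>i < length \<Delta>. endv C' i = \<sigma> (endv C i)) \<and>
     (\<forall>j < r + s. markv C' j = \<sigma> (markv C j))"

definition iso_un :: "nat \<Rightarrow> nat \<Rightarrow> (int \<times> int) list \<Rightarrow> (pcurve \<times> pcurve) set" where
  "iso_un r s \<Delta> = {(C, C'). \<exists>\<sigma>. curve_iso r s \<Delta> C C' \<sigma>}"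

definition iso_or :: "nat \<Rightarrow> nat \<Rightarrow> (int \<times> int) list \<Rightarrow>
    ((pcurve \<times> (nat \<Rightarrow> nat \<Rightarrow> bool)) \<times> (pcurve \<times> (nat \<Rightarrow> nat \<Rightarrow> bool))) set" where
  "iso_or r s \<Delta> = {((C, ori), (C', ori')). \<exists>\<sigma>. curve_iso r s \<Delta> C C' \<sigma> \<and>
       (\<forall>(u, w) \<in> bE C. ori' (\<sigma> u) (\<sigma> w) = ori u w)}"

definition Gperm :: "(int \<times> int) list \<Rightarrow> nat set \<Rightarrow> (nat \<Rightarrow> nat) set" where
  "Gperm \<Delta> F = {\<sigma>. \<sigma> permutes {..<length \<Delta>} \<and> (\<forall>i \<in> F. \<sigma> i = i) \<and>
                     (\<forall>i < length \<Delta>. \<Delta> ! (\<sigma> i) = \<Delta> ! i)}"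

definition urB_curves :: "nat \<Rightarrow> nat \<Rightarrow> (int \<times> int) list \<Rightarrow> nat set \<Rightarrow> conds \<Rightarrow> pcurve set" where
  "urB_curves r s \<Delta> F P = {C. unor_broccoli r s \<Delta> C \<and> ev_eq r s \<Delta> F C P}"

definition rB_curves :: "nat \<Rightarrow> nat \<Rightarrow> (int \<times> int) list \<Rightarrow> nat set \<Rightarrow> conds \<Rightarrow>
    (pcurve \<times> (nat \<Rightarrow> nat \<Rightarrow> bool)) set" where
  "rB_curves r s \<Delta> F P = {(C, ori). or_broccoli r s \<Delta> F (C, ori) \<and> ev_eq r s \<Delta> F C P}"

definition N_urB :: "nat \<Rightarrow> nat \<Rightarrow> real \<Rightarrow> (int \<times> int) list \<Rightarrow> nat set \<Rightarrow> conds \<Rightarrow> real" where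
  "N_urB r s y \<Delta> F P =
     (let A = urB_curves r s \<Delta> F P in
      (1 / real (card (Gperm \<Delta> F))) *
      (\<Sum>K \<in> A // (iso_un r s \<Delta> \<inter> A \<times> A). mult_un r s \<Delta> F y (SOME C. C \<in> K)))"

definition N_rB :: "nat \<Rightarrow> nat \<Rightarrow> real \<Rightarrow> (int \<times> int) list \<Rightarrow> nat set \<Rightarrow> conds \<Rightarrow> real" where
  "N_rB r s y \<Delta> F P =
     (let A = rB_curves r s \<Delta> F P in
      (1 / real (card (Gperm \<Delta> F))) *
      (\<Sum>K \<in> A // (iso_or r s \<Delta> \<inter> A \<times> A). mult_or r s \<Delta> F y (SOME Co. Co \<in> K)))"

end

theory Submission
  imports Defs "HOL-Library.Function_Algebras"
begin

text \<open>Define the slack of a subtree \<open>S\<close> of a curve \<open>C\<close> as the number of parameters of its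
  position, \<open>|S| + 1\<close>, minus the number of conditions that the markings and fixed ends in \<open>S\<close>
  impose. If \<open>C\<close> passes through conditions in general position, the evaluation map restricted to
  the cell of \<open>C\<close> has full-dimensional image, which forces every subtree to have non-negative
  slack. For an unoriented broccoli curve the slack of all of \<open>C\<close> is \<open>0\<close>, so the two branches at
  any bounded edge have slacks \<open>0\<close> and \<open>1\<close>; orienting each edge towards the branch of slack
  \<open>1\<close> gives every vertex exactly the inward edges a broccoli vertex of its type needs, and a
  count of inward edges of a branch shows that every broccoli orientation is of this form.
  Hence each unoriented broccoli curve carries exactly one broccoli orientation, with equal
  multiplicity, and this correspondence respects isomorphism classes.\<close>

section \<open>Trees given by symmetric edge relations\<close>

definition rel_dist :: "('a \<times> 'a) set \<Rightarrow> 'a \<Rightarrow> 'a \<Rightarrow> nat" where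
  "rel_dist R u x = (LEAST k. (u, x) \<in> R ^^ k)"

lemma rtrancl_closer_predecessor:
  assumes "(u, x) \<in> R\<^sup>*" "x \<noteq> u"
  shows "\<exists>y. (u, y) \<in> R\<^sup>* \<and> (y, x) \<in> R \<and> rel_dist R u y < rel_dist R u x"
proof -
  obtain k where k: "(u, x) \<in> R ^^ k" using assms(1) rtrancl_power by blast
  define m where "m = rel_dist R u x"
  have m: "(u, x) \<in> R ^^ m" unfolding m_def rel_dist_def by (rule LeastI[of _ k], fact k)
  have "m \<noteq> 0" using m assms(2) by (cases m) auto
  then obtain m' where mm: "m = Suc m'" by (cases m) auto
  from m mm obtain y where y1: "(u, y) \<in> R ^^ m'" and y2: "(y, x) \<in> R" by auto
  have "rel_dist R u y \<le> m'" unfolding rel_dist_def by (rule Least_le, fact y1)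
  then show ?thesis using y1 y2 mm m_def relpow_imp_rtrancl by fastforce
qed

lemma exists_parent_function:
  assumes "\<forall>x\<in>S. (u0, x) \<in> (R \<inter> S \<times> S)\<^sup>*"
  shows "\<exists>p ht. \<forall>x\<in>S - {u0}. p x \<in> S \<and> (p x, x) \<in> R \<and> ht (p x) < (ht x :: nat)"
proof -
  let ?R = "R \<inter> S \<times> S"
  have "\<exists>y. (u0, y) \<in> ?R\<^sup>* \<and> (y, x) \<in> ?R \<and> rel_dist ?R u0 y < rel_dist ?R u0 x"
    if "x \<in> S - {u0}" for x
    using rtrancl_closer_predecessor[of u0 x ?R] assms that by auto
  then have "\<exists>p. \<forall>x\<in>S - {u0}. (p x, x) \<in> ?R \<and> rel_dist ?R u0 (p x) < rel_dist ?R u0 x"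
    by metis
  then show ?thesis by blast
qed

lemma card_edges_ge_connected:
  assumes fin: "finite V" and sub: "E \<subseteq> V \<times> V" and sy: "sym E" and u: "u \<in> V"
    and conn: "\<forall>x\<in>V. (u, x) \<in> E\<^sup>*"
  shows "2 * (card V - 1) \<le> card E"
proof -
  have "\<forall>x\<in>V. (u, x) \<in> (E \<inter> V \<times> V)\<^sup>*" using conn sub Int_absorb2 by metis
  then obtain p and ht :: "_ \<Rightarrow> nat" where p: "\<And>x. x \<in> V - {u} \<Longrightarrow> (p x, x) \<in> E \<and> ht (p x) < ht x"
    using exists_parent_function by metis
  define W where "W = V - {u}"
  have i1: "inj_on (\<lambda>x. (p x, x)) W" and i2: "inj_on (\<lambda>x. (x, p x)) W"
    by (auto simp: inj_on_def)
  have dj: "(\<lambda>x. (p x, x)) ` W \<inter> (\<lambda>x. (x, p x)) ` W = {}"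
  proof (rule ccontr)
    assume "\<not> ?thesis"
    then obtain x y where xy: "x \<in> W" "y \<in> W" "(p x, x) = (y, p y)" by blast
    then show False using p[of x] p[of y] unfolding W_def by auto
  qed
  have ss: "(\<lambda>x. (p x, x)) ` W \<union> (\<lambda>x. (x, p x)) ` W \<subseteq> E"
    using p sy unfolding W_def by (auto dest: symD)
  have fE: "finite E" using sub fin by (meson finite_SigmaI finite_subset)
  have fW: "finite W" using fin W_def by auto
  have "card ((\<lambda>x. (p x, x)) ` W \<union> (\<lambda>x. (x, p x)) ` W) = 2 * card W"
    using card_Un_disjoint[OF finite_imageI[OF fW] finite_imageI[OF fW] dj]
      card_image[OF i1] card_image[OF i2] by simp
  then have "2 * card W \<le> card E" using card_mono[OF fE ss] by linarith
  moreover have "card W = card V - 1" using u fin W_def by simp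
  ultimately show ?thesis by simp
qed

definition del_edge :: "('a \<times> 'a) set \<Rightarrow> 'a \<Rightarrow> 'a \<Rightarrow> ('a \<times> 'a) set" where
  "del_edge E u w = E - {(u, w), (w, u)}"

definition branch :: "('a \<times> 'a) set \<Rightarrow> 'a \<Rightarrow> 'a \<Rightarrow> 'a set" where
  "branch E u w = {x. (u, x) \<in> (del_edge E u w)\<^sup>*}"

lemma del_edge_commute: "del_edge E w u = del_edge E u w"
  unfolding del_edge_def by auto

lemma sym_del_edge: "sym E \<Longrightarrow> sym (del_edge E u w)"
  unfolding del_edge_def sym_def by auto

lemma branch_refl: "u \<in> branch E u w"
  unfolding branch_def by auto

lemma branch_step: "x \<in> branch E u w \<Longrightarrow> (x, y) \<in> del_edge E u w \<Longrightarrow> y \<in> branch E u w"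
  unfolding branch_def by (auto intro: rtrancl_into_rtrancl)

lemma branch_step_back:
  "sym E \<Longrightarrow> x \<in> branch E u w \<Longrightarrow> (y, x) \<in> del_edge E u w \<Longrightarrow> y \<in> branch E u w"
  using branch_step sym_del_edge by (metis symD)

lemma branch_connected:
  assumes "x \<in> branch E u w" shows "(u, x) \<in> (E \<inter> branch E u w \<times> branch E u w)\<^sup>*"
proof -
  have "(u, x) \<in> (del_edge E u w)\<^sup>*" using assms unfolding branch_def by auto
  then show ?thesis
  proof induct
    case (step y z)
    have "y \<in> branch E u w" "z \<in> branch E u w"
      using step unfolding branch_def by (auto intro: rtrancl_into_rtrancl)
    then have "(y, z) \<in> E \<inter> branch E u w \<times> branch E u w" using step(2) unfolding del_edge_def by auto
    then show ?case by (rule rtrancl_into_rtrancl[OF step(3)])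
  qed simp
qed

text \<open>Edges are stored in both directions, hence the count \<open>2(|V| - 1)\<close>.\<close>
locale tree =
  fixes V :: "'a set" and E :: "('a \<times> 'a) set"
  assumes fin: "finite V" and sub: "E \<subseteq> V \<times> V" and sy: "sym E"
    and irrefl: "\<And>u. (u, u) \<notin> E"
    and conn: "\<And>u w. u \<in> V \<Longrightarrow> w \<in> V \<Longrightarrow> (u, w) \<in> E\<^sup>*"
    and card_E: "card E = 2 * (card V - 1)"
begin

lemma finite_E: "finite E" using sub fin by (meson finite_SigmaI finite_subset)

lemma edge_in_V: "(u, w) \<in> E \<Longrightarrow> u \<in> V \<and> w \<in> V" using sub by auto

lemma edge_sym: "(u, w) \<in> E \<Longrightarrow> (w, u) \<in> E" using sy by (auto dest: symD)

lemma branch_subset: "u \<in> V \<Longrightarrow> branch E u w \<subseteq> V"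
proof
  fix x assume u: "u \<in> V" and "x \<in> branch E u w"
  then have "(u, x) \<in> (del_edge E u w)\<^sup>*" unfolding branch_def by auto
  then show "x \<in> V" using u by induct (auto simp: del_edge_def dest: edge_in_V)
qed

text \<open>Otherwise the edge \<open>{u, w}\<close> could be deleted keeping the relation connected, contradicting
  the edge count.\<close>
lemma other_end_not_in_branch:
  assumes e: "(u, w) \<in> E" shows "w \<notin> branch E u w"
proof
  assume w: "w \<in> branch E u w"
  have uV: "u \<in> V" and wV: "w \<in> V" using edge_in_V e by auto
  have cn: "\<forall>x\<in>V. (u, x) \<in> (del_edge E u w)\<^sup>*"
  proof
    fix x assume "x \<in> V"
    then have "(u, x) \<in> E\<^sup>*" using conn uV by auto
    then show "(u, x) \<in> (del_edge E u w)\<^sup>*"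
    proof induct
      case (step y z)
      show ?case
      proof (cases "(y, z) \<in> del_edge E u w")
        case True then show ?thesis using step by (auto intro: rtrancl_into_rtrancl)
      next
        case False
        then have "(y, z) = (u, w) \<or> (y, z) = (w, u)" using step unfolding del_edge_def by auto
        then show ?thesis using w unfolding branch_def by auto
      qed
    qed simp
  qed
  have ne: "u \<noteq> w" using irrefl e by auto
  have "2 * (card V - 1) \<le> card (del_edge E u w)"
    by (rule card_edges_ge_connected[OF fin _ sym_del_edge[OF sy] uV cn])
      (use sub in \<open>auto simp: del_edge_def\<close>)
  moreover have "card (del_edge E u w) = card E - 2"
    using e edge_sym[OF e] finite_E ne unfolding del_edge_def by (subst card_Diff_subset) auto
  moreover have "card V \<ge> 2"
    using card_mono[OF fin, of "{u, w}"] uV wV ne by simp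
  ultimately show False using card_E by linarith
qed

lemma branch_cover:
  assumes e: "(u, w) \<in> E" and x: "x \<in> V"
  shows "x \<in> branch E u w \<or> x \<in> branch E w u"
proof -
  have "(u, x) \<in> E\<^sup>*" using conn edge_in_V[OF e] x by auto
  then show ?thesis
  proof induct
    case base then show ?case by (simp add: branch_refl)
  next
    case (step y z)
    show ?case
    proof (cases "(y, z) \<in> del_edge E u w")
      case True then show ?thesis using step branch_step del_edge_commute by metis
    next
      case False
      then have "(y, z) = (u, w) \<or> (y, z) = (w, u)" using step unfolding del_edge_def by auto
      then show ?thesis
        using step(3) other_end_not_in_branch[OF e] other_end_not_in_branch[OF edge_sym[OF e]]
          branch_refl[of w E u] branch_refl[of u E w] by auto
    qed
  qed
qed

lemma branch_disjoint:
  assumes e: "(u, w) \<in> E" shows "branch E u w \<inter> branch E w u = {}"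
proof (rule ccontr)
  assume "\<not> ?thesis"
  then obtain x where "(u, x) \<in> (del_edge E u w)\<^sup>*" "(w, x) \<in> (del_edge E u w)\<^sup>*"
    unfolding branch_def using del_edge_commute[of E w u] by auto
  then have "(u, w) \<in> (del_edge E u w)\<^sup>*"
    using sym_rtrancl[OF sym_del_edge[OF sy]] by (meson rtrancl_trans symD)
  then show False using other_end_not_in_branch[OF e] unfolding branch_def by auto
qed

lemma branch_at_neighbour:
  assumes v: "v \<in> V" and x: "x \<in> V" and xv: "x \<noteq> v"
  shows "\<exists>w. (v, w) \<in> E \<and> x \<in> branch E w v"
proof -
  have "(v, x) \<in> E\<^sup>*" using conn v x by auto
  then have "x = v \<or> (\<exists>w. (v, w) \<in> E \<and> x \<in> branch E w v)"
  proof induct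
    case (step y z)
    show ?case
    proof (cases "y = v")
      case True
      then show ?thesis using step(2) branch_refl[of z E v] by blast
    next
      case False
      then obtain w where w: "(v, w) \<in> E" "y \<in> branch E w v" using step by auto
      show ?thesis
      proof (cases "(y, z) \<in> del_edge E w v")
        case True
        then show ?thesis using branch_step[OF w(2)] w(1) by blast
      next
        case False
        then show ?thesis using step(2) \<open>y \<noteq> v\<close> unfolding del_edge_def by auto
      qed
    qed
  qed simp
  then show ?thesis using xv by auto
qed

lemma branches_at_vertex_disjoint:
  assumes e1: "(v, w) \<in> E" and e2: "(v, w') \<in> E" and ne: "w \<noteq> w'"
  shows "branch E w v \<inter> branch E w' v = {}"
proof -
  have vw: "v \<noteq> w" using irrefl e1 by auto
  have "(v, w') \<in> del_edge E v w" using e2 ne vw unfolding del_edge_def by auto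
  then have w'_in: "w' \<in> branch E v w" using branch_step branch_refl by metis
  have "branch E w' v \<subseteq> branch E v w"
  proof
    fix x assume "x \<in> branch E w' v"
    then have "(w', x) \<in> (del_edge E w' v)\<^sup>*" unfolding branch_def by auto
    then show "x \<in> branch E v w"
    proof induct
      case base then show ?case by (fact w'_in)
    next
      case (step y z)
      have "y \<in> branch E w' v" "z \<in> branch E w' v"
        using step unfolding branch_def by (auto intro: rtrancl_into_rtrancl)
      then have "(y, z) \<in> del_edge E v w"
        using step(2) other_end_not_in_branch[OF edge_sym[OF e2]] unfolding del_edge_def by auto
      then show ?case using step(3) branch_step by metis
    qed
  qed
  then show ?thesis using branch_disjoint[OF edge_sym[OF e1]] by auto
qed

text \<open>Each branch is itself a tree: both branches at an edge carry at least the edges of a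
  spanning tree, and the edge count leaves no room for more.\<close>
lemma card_branch_edges:
  assumes e: "(u, w) \<in> E"
  shows "card (E \<inter> branch E w u \<times> branch E w u) = 2 * (card (branch E w u) - 1)"
proof -
  define A where "A = branch E w u"
  define B where "B = branch E u w"
  have uV: "u \<in> V" and wV: "w \<in> V" using edge_in_V e by auto
  have AV: "A \<subseteq> V" and BV: "B \<subseteq> V" using branch_subset uV wV A_def B_def by auto
  have fA: "finite A" and fB: "finite B" using AV BV fin finite_subset by auto
  have AB: "A \<inter> B = {}" using branch_disjoint[OF e] A_def B_def by auto
  have cov: "V = A \<union> B" using branch_cover[OF e] AV BV A_def B_def by auto
  have wA: "w \<in> A" and uB: "u \<in> B" using branch_refl A_def B_def by auto
  have lb: "2 * (card (branch E a b) - 1) \<le> card (E \<inter> branch E a b \<times> branch E a b)"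
    if "a \<in> V" for a b
    using branch_subset[OF that] branch_connected[of _ E a b] fin sy
    by (intro card_edges_ge_connected[OF _ _ _ branch_refl])
      (auto simp: sym_def intro: finite_subset)
  have dj: "(E \<inter> A \<times> A) \<inter> (E \<inter> B \<times> B) = {}"
    "((E \<inter> A \<times> A) \<union> (E \<inter> B \<times> B)) \<inter> {(u, w), (w, u)} = {}"
    using AB wA uB by auto
  have ss: "(E \<inter> A \<times> A) \<union> (E \<inter> B \<times> B) \<union> {(u, w), (w, u)} \<subseteq> E"
    using e edge_sym[OF e] by auto
  have ne: "u \<noteq> w" using irrefl e by auto
  have "card ((E \<inter> A \<times> A) \<union> (E \<inter> B \<times> B) \<union> {(u, w), (w, u)})
        = card (E \<inter> A \<times> A) + card (E \<inter> B \<times> B) + 2"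
    using card_Un_disjoint[OF _ _ dj(2)] card_Un_disjoint[OF _ _ dj(1)] finite_E ne by simp
  then have "card (E \<inter> A \<times> A) + card (E \<inter> B \<times> B) + 2 \<le> card E"
    using card_mono[OF finite_E ss] by simp
  moreover have "card V = card A + card B" using cov AB fA fB by (simp add: card_Un_disjoint)
  moreover have "card A \<noteq> 0" "card B \<noteq> 0" using wA uB fA fB by auto
  ultimately show ?thesis
    using lb[OF wV, of u] lb[OF uV, of w] card_E unfolding A_def B_def by linarith
qed

end

section \<open>Vertex counts of unoriented broccoli curves\<close>

lemma is_curve_tree: "is_curve r s \<Delta> C \<Longrightarrow> tree {..<nV C} (bE C)"
  unfolding is_curve_def by unfold_locales auto

lemma sum_card_fibers:
  assumes "finite A" "finite B" "g ` A \<subseteq> B"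
  shows "(\<Sum>v\<in>B. card {i\<in>A. g i = v}) = card A"
  using sum.group[OF assms, of "\<lambda>_. 1::nat"] by (simp only: card_eq_sum)

lemma unor_broccoli_is_curve: "unor_broccoli r s \<Delta> C \<Longrightarrow> is_curve r s \<Delta> C"
  unfolding unor_broccoli_def by auto

lemma unor_broccoli_vertex_types:
  assumes "unor_broccoli r s \<Delta> C" "v < nV C"
  shows "typeI' r s \<Delta> C v \<or> typeII' r s \<Delta> C v \<or> typeIII' r s \<Delta> C v"
  using assms unfolding unor_broccoli_def by auto

lemma marks_unor_broccoli:
  assumes "unor_broccoli r s \<Delta> C" "v < nV C"
  shows "marks r s C v = {} \<or> (\<exists>j<r+s. marks r s C v = {j})"
  using unor_broccoli_vertex_types[OF assms] unfolding typeI'_def typeII'_def typeIII'_def by auto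

lemma typeI'_iff_real_mark:
  assumes "unor_broccoli r s \<Delta> C" "v < nV C"
  shows "typeI' r s \<Delta> C v \<longleftrightarrow> (\<exists>j<r. marks r s C v = {j})"
  using unor_broccoli_vertex_types[OF assms] unfolding typeI'_def typeII'_def typeIII'_def by auto

lemma typeII'_iff_no_mark:
  assumes "unor_broccoli r s \<Delta> C" "v < nV C"
  shows "typeII' r s \<Delta> C v \<longleftrightarrow> marks r s C v = {}"
  using unor_broccoli_vertex_types[OF assms] unfolding typeI'_def typeII'_def typeIII'_def by auto

lemma card_flags_unor_broccoli:
  assumes "unor_broccoli r s \<Delta> C" "v < nV C"
  shows "card (flags \<Delta> C v) = (if typeI' r s \<Delta> C v then 2 else 3)"
  using unor_broccoli_vertex_types[OF assms] unfolding typeI'_def typeII'_def typeIII'_def by auto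

lemma markv_less: "is_curve r s \<Delta> C \<Longrightarrow> j < r + s \<Longrightarrow> markv C j < nV C"
  unfolding is_curve_def by auto

lemma endv_less: "is_curve r s \<Delta> C \<Longrightarrow> i < length \<Delta> \<Longrightarrow> endv C i < nV C"
  unfolding is_curve_def by auto

lemma finite_flags: "is_curve r s \<Delta> C \<Longrightarrow> finite (flags \<Delta> C v)"
  unfolding is_curve_def flags_def by (auto intro: finite_subset[of _ "{..<nV C}"])

lemma markv_bij_betw:
  assumes b: "unor_broccoli r s \<Delta> C" and J: "J \<subseteq> {..<r+s}"
  shows "bij_betw (markv C) J {v. v < nV C \<and> (\<exists>j\<in>J. marks r s C v = {j})}"
proof -
  have c: "is_curve r s \<Delta> C" using b unor_broccoli_is_curve by auto
  have sing: "marks r s C (markv C j) = {j}" if "j < r + s" for j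
  proof -
    have "j \<in> marks r s C (markv C j)" using that unfolding marks_def by auto
    then show ?thesis using marks_unor_broccoli[OF b markv_less[OF c that]] by auto
  qed
  show ?thesis unfolding bij_betw_def
  proof
    show "inj_on (markv C) J"
    proof (rule inj_onI)
      fix j j' assume "j \<in> J" "j' \<in> J" "markv C j = markv C j'"
      then show "j = j'" using sing[of j] sing[of j'] J by auto
    qed
    show "markv C ` J = {v. v < nV C \<and> (\<exists>j\<in>J. marks r s C v = {j})}"
    proof (rule set_eqI, rule iffI)
      fix v assume "v \<in> markv C ` J"
      then show "v \<in> {v. v < nV C \<and> (\<exists>j\<in>J. marks r s C v = {j})}"
        using sing J markv_less[OF c] by auto
    next
      fix v assume "v \<in> {v. v < nV C \<and> (\<exists>j\<in>J. marks r s C v = {j})}"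
      then obtain j where "j \<in> J" "marks r s C v = {j}" by auto
      then show "v \<in> markv C ` J" unfolding marks_def by auto
    qed
  qed
qed

lemma sum_card_flags:
  assumes c: "is_curve r s \<Delta> C"
  shows "(\<Sum>v<nV C. card (flags \<Delta> C v)) = card (bE C) + length \<Delta>"
proof -
  have sub: "bE C \<subseteq> {..<nV C} \<times> {..<nV C}" using c unfolding is_curve_def by auto
  have fe: "finite {w. (v, w) \<in> bE C}" for v
    by (rule finite_subset[of _ "{..<nV C}"]) (use sub in auto)
  have "card (flags \<Delta> C v) = card {w. (v, w) \<in> bE C} + card {i. i < length \<Delta> \<and> endv C i = v}" for v
    unfolding flags_def using fe by (subst card_Un_disjoint) (auto simp: card_image)
  moreover have "(\<Sum>v<nV C. card {w. (v, w) \<in> bE C}) = card (bE C)"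
  proof -
    have "card (bE C) = card (Sigma {..<nV C} (\<lambda>v. {w. (v, w) \<in> bE C}))"
      using sub by (intro arg_cong[where f = card]) auto
    also have "\<dots> = (\<Sum>v<nV C. card {w. (v, w) \<in> bE C})" by (rule card_SigmaI) (use fe in auto)
    finally show ?thesis by simp
  qed
  moreover have "(\<Sum>v<nV C. card {i. i < length \<Delta> \<and> endv C i = v}) = length \<Delta>"
    using sum_card_fibers[of "{..<length \<Delta>}" "{..<nV C}" "endv C"] endv_less[OF c] by auto
  ultimately show ?thesis by (simp add: sum.distrib)
qed

text \<open>The number of inward edges that a vertex of an oriented broccoli curve must have: two at
  type II, none at types I and III.\<close>
definition req_in_flags :: "nat \<Rightarrow> nat \<Rightarrow> (int \<times> int) list \<Rightarrow> pcurve \<Rightarrow> nat \<Rightarrow> nat" where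
  "req_in_flags r s \<Delta> C v = (if typeII' r s \<Delta> C v then 2 else 0)"

definition fixed_ends_at :: "nat set \<Rightarrow> pcurve \<Rightarrow> nat \<Rightarrow> nat" where
  "fixed_ends_at F C v = card {i\<in>F. endv C i = v}"

text \<open>The position of a subtree \<open>S\<close> has \<open>|S| + 1\<close> parameters (a point and \<open>|S| - 1\<close> edge
  lengths); each marking in \<open>S\<close> imposes two conditions and each fixed end one.\<close>
definition slack :: "nat \<Rightarrow> nat \<Rightarrow> nat set \<Rightarrow> pcurve \<Rightarrow> nat set \<Rightarrow> int" where
  "slack r s F C S = 1 + int (card S) - 2 * int (card {j. j < r + s \<and> markv C j \<in> S})
                     - int (card {i\<in>F. endv C i \<in> S})"

locale broccoli_setting =
  fixes r s :: nat and \<Delta> :: "(int \<times> int) list" and F :: "nat set"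
  assumes F_sub: "F \<subseteq> {..<length \<Delta>}" and dim_count: "r + 2 * s + card F + 1 = length \<Delta>"
begin

lemma finite_F: "finite F" using F_sub finite_subset by blast

lemma nV_unor_broccoli:
  assumes b: "unor_broccoli r s \<Delta> C"
  shows "int (nV C) = 2 * int r + 2 * int s + int (card F) - 1"
proof -
  have c: "is_curve r s \<Delta> C" using b unor_broccoli_is_curve by auto
  define I where "I = {..<nV C} \<inter> {v. typeI' r s \<Delta> C v}"
  define I' where "I' = {..<nV C} \<inter> - {v. typeI' r s \<Delta> C v}"
  have "I = {v. v < nV C \<and> (\<exists>j\<in>{..<r}. marks r s C v = {j})}"
    using typeI'_iff_real_mark[OF b] unfolding I_def by auto
  then have cI: "card I = r" using bij_betw_same_card[OF markv_bij_betw[OF b, of "{..<r}"]] by simp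
  have "(\<Sum>v<nV C. card (flags \<Delta> C v)) = (\<Sum>v<nV C. (if typeI' r s \<Delta> C v then 2 else 3))"
    using card_flags_unor_broccoli[OF b] by (intro sum.cong) auto
  also have "\<dots> = 2 * card I + 3 * card I'" unfolding I_def I'_def by (simp add: sum.If_cases)
  finally have "2 * r + 3 * card I' = 2 * (nV C - 1) + length \<Delta>"
    using sum_card_flags[OF c] cI c unfolding is_curve_def by simp
  moreover have "card I + card I' = nV C"
    unfolding I_def I'_def by (subst card_Un_disjoint[symmetric]) (auto simp: Int_Un_distrib[symmetric])
  moreover have "0 < nV C" using c unfolding is_curve_def by auto
  ultimately show ?thesis using cI dim_count by linarith
qed

lemma sum_req_in_flags:
  assumes b: "unor_broccoli r s \<Delta> C" and S: "S \<subseteq> {..<nV C}"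
  shows "(\<Sum>x\<in>S. req_in_flags r s \<Delta> C x) + 2 * card {j. j < r + s \<and> markv C j \<in> S} = 2 * card S"
proof -
  have fS: "finite S" using S finite_subset by blast
  define J where "J = {j. j < r + s \<and> markv C j \<in> S}"
  have "{v. v < nV C \<and> (\<exists>j\<in>J. marks r s C v = {j})} = {x\<in>S. \<not> typeII' r s \<Delta> C x}"
  proof (rule set_eqI, rule iffI)
    fix v assume "v \<in> {v. v < nV C \<and> (\<exists>j\<in>J. marks r s C v = {j})}"
    then obtain j where v: "v < nV C" "j \<in> J" "marks r s C v = {j}" by auto
    then have "markv C j = v" unfolding marks_def by auto
    then show "v \<in> {x\<in>S. \<not> typeII' r s \<Delta> C x}" using typeII'_iff_no_mark[OF b v(1)] v J_def by auto
  next
    fix v assume v: "v \<in> {x\<in>S. \<not> typeII' r s \<Delta> C x}"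
    then have vl: "v < nV C" using S by auto
    then obtain j where j: "j < r + s" "marks r s C v = {j}"
      using typeII'_iff_no_mark[OF b vl] marks_unor_broccoli[OF b vl] v by auto
    then have "markv C j = v" unfolding marks_def by auto
    then show "v \<in> {v. v < nV C \<and> (\<exists>j\<in>J. marks r s C v = {j})}" using vl j v J_def by auto
  qed
  then have "card J = card {x\<in>S. \<not> typeII' r s \<Delta> C x}"
    using bij_betw_same_card[OF markv_bij_betw[OF b, of J]] unfolding J_def by auto
  moreover have "(\<Sum>x\<in>S. req_in_flags r s \<Delta> C x) = 2 * card {x\<in>S. typeII' r s \<Delta> C x}"
    unfolding req_in_flags_def using sum.inter_filter[OF fS, of "\<lambda>_. 2::nat" "typeII' r s \<Delta> C"]
    by simp
  moreover have "card S = card ({x\<in>S. typeII' r s \<Delta> C x} \<union> {x\<in>S. \<not> typeII' r s \<Delta> C x})"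
    by (rule arg_cong[where f = card]) auto
  moreover have "\<dots> = card {x\<in>S. typeII' r s \<Delta> C x} + card {x\<in>S. \<not> typeII' r s \<Delta> C x}"
    using fS by (intro card_Un_disjoint) auto
  ultimately show ?thesis unfolding J_def by simp
qed

lemma sum_fixed_ends_at:
  assumes "finite S"
  shows "(\<Sum>x\<in>S. fixed_ends_at F C x) = card {i\<in>F. endv C i \<in> S}"
proof -
  have "(\<Sum>x\<in>S. card {i\<in>{i\<in>F. endv C i \<in> S}. endv C i = x}) = card {i\<in>F. endv C i \<in> S}"
    by (rule sum_card_fibers) (use assms finite_F in auto)
  moreover have "{i\<in>{i\<in>F. endv C i \<in> S}. endv C i = x} = {i\<in>F. endv C i = x}" if "x \<in> S" for x
    using that by auto
  ultimately show ?thesis unfolding fixed_ends_at_def by simp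
qed

lemma slack_eq_sum:
  assumes b: "unor_broccoli r s \<Delta> C" and S: "S \<subseteq> {..<nV C}"
  shows "slack r s F C S
       = 1 + (\<Sum>x\<in>S. int (req_in_flags r s \<Delta> C x) - 1 - int (fixed_ends_at F C x))"
  using sum_req_in_flags[OF b S] sum_fixed_ends_at[of S C] finite_subset[OF S]
  unfolding slack_def sum_subtractf by (simp add: of_nat_sum[symmetric] del: of_nat_sum)

lemma slack_vertices:
  assumes b: "unor_broccoli r s \<Delta> C"
  shows "slack r s F C {..<nV C} = 0"
proof -
  have c: "is_curve r s \<Delta> C" using b unor_broccoli_is_curve by auto
  have "{j. j < r + s \<and> markv C j \<in> {..<nV C}} = {..<r+s}" using markv_less[OF c] by auto
  moreover have "{i\<in>F. endv C i \<in> {..<nV C}} = F" using endv_less[OF c] F_sub by auto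
  ultimately show ?thesis using nV_unor_broccoli[OF b] unfolding slack_def by simp
qed

lemma sum_vertex_weights:
  assumes b: "unor_broccoli r s \<Delta> C"
  shows "(\<Sum>x<nV C. int (req_in_flags r s \<Delta> C x) - 1 - int (fixed_ends_at F C x)) = -1"
  using slack_vertices[OF b] slack_eq_sum[OF b, of "{..<nV C}"] by simp

lemma slack_branches:
  assumes b: "unor_broccoli r s \<Delta> C" and e: "(u, w) \<in> bE C"
  shows "slack r s F C (branch (bE C) u w) + slack r s F C (branch (bE C) w u) = 1"
proof -
  interpret T: tree "{..<nV C}" "bE C" by (rule is_curve_tree[OF unor_broccoli_is_curve[OF b]])
  define g where "g x = int (req_in_flags r s \<Delta> C x) - 1 - int (fixed_ends_at F C x)" for x
  let ?A = "branch (bE C) u w" and ?B = "branch (bE C) w u"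
  have S: "?A \<subseteq> {..<nV C}" "?B \<subseteq> {..<nV C}" using T.branch_subset T.edge_in_V[OF e] by auto
  have "?A \<union> ?B = {..<nV C}" using T.branch_cover[OF e] S by blast
  then have "(\<Sum>x<nV C. g x) = (\<Sum>x\<in>?A. g x) + (\<Sum>x\<in>?B. g x)"
    by (metis sum.union_disjoint T.branch_disjoint[OF e] S finite_lessThan finite_subset)
  then show ?thesis using sum_vertex_weights[OF b] slack_eq_sum[OF b S(1)] slack_eq_sum[OF b S(2)]
    unfolding g_def by simp
qed

lemma sum_slack_branches_at_vertex:
  assumes b: "unor_broccoli r s \<Delta> C" and x: "x < nV C"
  shows "(\<Sum>y\<in>{y. (x, y) \<in> bE C}. slack r s F C (branch (bE C) y x))
       = int (card {y. (x, y) \<in> bE C}) - int (req_in_flags r s \<Delta> C x) + int (fixed_ends_at F C x)"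
proof -
  interpret T: tree "{..<nV C}" "bE C" by (rule is_curve_tree[OF unor_broccoli_is_curve[OF b]])
  define N where "N = {y. (x, y) \<in> bE C}"
  define g where "g z = int (req_in_flags r s \<Delta> C z) - 1 - int (fixed_ends_at F C z)" for z
  have fN: "finite N" unfolding N_def by (rule finite_subset[of _ "{..<nV C}"]) (use T.edge_in_V in auto)
  have S: "branch (bE C) y x \<subseteq> {..<nV C}" if "y \<in> N" for y
    using T.branch_subset T.edge_in_V that N_def by blast
  have "(\<Union>y\<in>N. branch (bE C) y x) = {..<nV C} - {x}"
  proof
    show "(\<Union>y\<in>N. branch (bE C) y x) \<subseteq> {..<nV C} - {x}"
      using S T.other_end_not_in_branch[OF T.edge_sym] unfolding N_def by blast
    show "{..<nV C} - {x} \<subseteq> (\<Union>y\<in>N. branch (bE C) y x)"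
      using T.branch_at_neighbour[of x] x unfolding N_def by blast
  qed
  moreover have "(\<Sum>z\<in>(\<Union>y\<in>N. branch (bE C) y x). g z) = (\<Sum>y\<in>N. \<Sum>z\<in>branch (bE C) y x. g z)"
  proof (rule sum.UNION_disjoint[OF fN])
    show "\<forall>y\<in>N. finite (branch (bE C) y x)" using S finite_subset by blast
    show "\<forall>y\<in>N. \<forall>y'\<in>N. y \<noteq> y' \<longrightarrow> branch (bE C) y x \<inter> branch (bE C) y' x = {}"
      using T.branches_at_vertex_disjoint unfolding N_def by blast
  qed
  ultimately have "(\<Sum>y\<in>N. \<Sum>z\<in>branch (bE C) y x. g z) = (\<Sum>z\<in>{..<nV C} - {x}. g z)" by simp
  also have "\<dots> = -1 - g x" using sum_vertex_weights[OF b] x unfolding g_def by (simp add: sum_diff1)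
  finally show ?thesis
    using slack_eq_sum[OF b S] unfolding N_def[symmetric] g_def by (simp add: sum.distrib)
qed

end

section \<open>General position bounds the conditions on a subtree\<close>

text \<open>Function_Algebras makes \<open>'a \<Rightarrow> real\<close> an additive group but gives it no \<open>scaleR\<close>.\<close>
definition fun_scale :: "real \<Rightarrow> ('a \<Rightarrow> real) \<Rightarrow> 'a \<Rightarrow> real" where
  "fun_scale c f = (\<lambda>t. c * f t)"

interpretation fun_vs: vector_space fun_scale
  by unfold_locales (auto simp: fun_scale_def fun_eq_iff algebra_simps)

lemma sum_apply: "(\<Sum>x\<in>A. f x) t = (\<Sum>x\<in>A. f x t)" for f :: "'b \<Rightarrow> 'c \<Rightarrow> 'd::comm_monoid_add"
  by (induct A rule: infinite_finite_induct) auto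

lemma independent_family_card_le:
  fixes q :: "nat \<Rightarrow> 'a \<Rightarrow> real"
  assumes indep: "\<forall>c. (\<forall>t. (\<Sum>i\<in>{1..N}. c i * q i t) = 0) \<longrightarrow> (\<forall>i\<in>{1..N}. c i = 0)"
    and span: "\<forall>i\<in>{1..N}. q i \<in> fun_vs.span G" and fG: "finite G"
  shows "N \<le> card G"
proof -
  have inj: "inj_on q {1..N}"
  proof (rule inj_onI, rule ccontr)
    fix i j assume i: "i \<in> {1..N}" and j: "j \<in> {1..N}" and e: "q i = q j" and ne: "i \<noteq> j"
    define c where "c k = (if k = i then 1 else if k = j then -1 else (0::real))" for k
    have "(\<Sum>k\<in>{1..N}. c k * q k t) = q i t - q j t" for t
    proof -
      have "(\<Sum>k\<in>{1..N}. c k * q k t)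
          = (\<Sum>k\<in>{1..N}. (if k = i then q i t else 0) - (if k = j then q j t else 0))"
        by (rule sum.cong) (auto simp: c_def ne)
      then show ?thesis using i j by (simp add: sum_subtractf)
    qed
    then have "c i = 0" using indep i e by simp
    then show False by (simp add: c_def)
  qed
  define Q where "Q = q ` {1..N}"
  have fQ: "finite Q" unfolding Q_def by simp
  have "fun_vs.independent Q"
  proof
    assume "fun_vs.dependent Q"
    then obtain u where u1: "\<exists>v\<in>Q. u v \<noteq> 0" and u2: "(\<Sum>v\<in>Q. fun_scale (u v) v) = 0"
      using fun_vs.dependent_finite[OF fQ] by blast
    have "(\<Sum>k\<in>{1..N}. u (q k) * q k t) = (\<Sum>v\<in>Q. fun_scale (u v) v) t" for t
      using sum.reindex[OF inj, of "\<lambda>v. u v * v t"] unfolding Q_def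
      by (simp add: comp_def sum_apply fun_scale_def)
    then have "\<forall>k\<in>{1..N}. u (q k) = 0" using indep[rule_format, of "\<lambda>k. u (q k)"] u2 by simp
    then show False using u1 unfolding Q_def by auto
  qed
  then have "card Q \<le> card G"
    using fun_vs.independent_span_bound[OF fG] span unfolding Q_def by auto
  then show ?thesis using card_image[OF inj] unfolding Q_def by simp
qed

lemma dim_ge_le_card_span:
  assumes "dim_ge N X" and "X \<subseteq> fun_vs.span G" and "finite G"
  shows "N \<le> card G"
proof -
  obtain p where p: "\<forall>i\<le>N. p i \<in> X"
    and indep: "\<forall>c. (\<forall>t. (\<Sum>i\<in>{1..N}. c i * (p i t - p 0 t)) = 0) \<longrightarrow> (\<forall>i\<in>{1..N}. c i = 0)"
    using assms(1) unfolding dim_ge_def by blast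
  have "(\<lambda>t. p i t - p 0 t) \<in> fun_vs.span G" if "i \<in> {1..N}" for i
    using fun_vs.span_diff[of "p i" G "p 0"] p that assms(2) by (auto simp: fun_diff_def)
  then show ?thesis by (intro independent_family_card_le[OF indep _ assms(3)]) blast
qed

inductive on_root_path :: "'v set \<Rightarrow> 'v \<Rightarrow> ('v \<Rightarrow> 'v) \<Rightarrow> 'v \<Rightarrow> 'v \<Rightarrow> bool" for S u0 p where
  here: "x \<in> S \<Longrightarrow> x \<noteq> u0 \<Longrightarrow> on_root_path S u0 p x x"
| up: "x \<in> S \<Longrightarrow> x \<noteq> u0 \<Longrightarrow> on_root_path S u0 p (p x) y \<Longrightarrow> on_root_path S u0 p x y"

lemma not_on_root_path_root: "\<not> on_root_path S u0 p u0 y"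
  by (auto elim: on_root_path.cases)

lemma on_root_path_step:
  "x \<in> S \<Longrightarrow> x \<noteq> u0 \<Longrightarrow> on_root_path S u0 p x y \<longleftrightarrow> y = x \<or> on_root_path S u0 p (p x) y"
  by (auto elim: on_root_path.cases intro: on_root_path.intros)

lemma on_root_path_height_le:
  assumes "on_root_path S u0 p x y" and "\<forall>z\<in>S - {u0}. ht (p z) < (ht z :: nat)"
  shows "ht y \<le> ht x"
  using assms by induct force+

lemma eq_root_plus_path_sum:
  fixes pos b :: "'v \<Rightarrow> 'a::real_vector" and L :: "'v \<Rightarrow> real"
  assumes fin: "finite S" and u0: "u0 \<in> S"
    and par: "\<forall>x\<in>S - {u0}. p x \<in> S \<and> ht (p x) < (ht x :: nat) \<and> pos x = pos (p x) + L x *\<^sub>R b x"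
    and x: "x \<in> S"
  shows "pos x = pos u0 + (\<Sum>y\<in>S - {u0}. if on_root_path S u0 p x y then L y *\<^sub>R b y else 0)"
  using x
proof (induction "ht x" arbitrary: x rule: less_induct)
  case less
  show ?case
  proof (cases "x = u0")
    case True then show ?thesis by (simp add: not_on_root_path_root)
  next
    case False
    then have x: "x \<in> S - {u0}" using less.prems by auto
    have px: "p x \<in> S" "ht (p x) < ht x" "pos x = pos (p x) + L x *\<^sub>R b x" using par x by auto
    have "\<not> on_root_path S u0 p (p x) x"
      using on_root_path_height_le[of S u0 p "p x" x ht] par px(2) by auto
    then have "(\<Sum>y\<in>S - {u0}. if on_root_path S u0 p x y then L y *\<^sub>R b y else 0)
        = L x *\<^sub>R b x + (\<Sum>y\<in>S - {u0} - {x}. if on_root_path S u0 p (p x) y then L y *\<^sub>R b y else 0)"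
      using on_root_path_step[of x S u0 p] x fin by (simp add: sum.remove)
    also have "\<dots> = L x *\<^sub>R b x + (\<Sum>y\<in>S - {u0}. if on_root_path S u0 p (p x) y then L y *\<^sub>R b y else 0)"
      using \<open>\<not> on_root_path S u0 p (p x) x\<close> x fin by (simp add: sum.remove[of "S - {u0}" x])
    finally show ?thesis using px less.hyps[OF px(2) px(1)] by (simp add: algebra_simps)
  qed
qed

definition ev_coords :: "nat \<Rightarrow> nat \<Rightarrow> nat set \<Rightarrow> nat set" where
  "ev_coords r s F = {..<2 * (r + s)} \<union> (\<lambda>i. i + 2 * (r + s)) ` F"

definition ev_vertex :: "nat \<Rightarrow> nat \<Rightarrow> pcurve \<Rightarrow> nat \<Rightarrow> nat" where
  "ev_vertex r s C t = (if t < 2 * (r + s) then markv C (t div 2) else endv C (t - 2 * (r + s)))"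

definition ev_direction :: "nat \<Rightarrow> nat \<Rightarrow> (int \<times> int) list \<Rightarrow> nat \<Rightarrow> real \<times> real" where
  "ev_direction r s \<Delta> t =
     (if t < 2 * (r + s) then (if even t then (1, 0) else (0, 1))
      else (- of_int (snd (\<Delta> ! (t - 2 * (r + s)))), of_int (fst (\<Delta> ! (t - 2 * (r + s))))))"

lemma evvec_cell:
  assumes C': "C' \<in> cell r s \<Delta> C" and F: "F \<subseteq> {..<length \<Delta>}"
  shows "evvec r s \<Delta> F C' t = (if t \<in> ev_coords r s F
           then ev_direction r s \<Delta> t \<bullet> vpos C' (ev_vertex r s C t) else 0)"
proof (cases "t < 2 * (r + s)")
  case True
  then have "markv C' (t div 2) = markv C (t div 2)" using C' unfolding cell_def by auto
  then show ?thesis using True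
    unfolding evvec_def ev_coords_def ev_vertex_def ev_direction_def by (auto simp: inner_prod_def)
next
  case False
  then obtain i where t: "t = i + 2 * (r + s)" by (metis add.commute le_Suc_ex not_less)
  show ?thesis
  proof (cases "i \<in> F")
    case True
    then have "endv C' i = endv C i" using C' F unfolding cell_def by auto
    then show ?thesis using True
      unfolding t evvec_def ev_coords_def ev_vertex_def ev_direction_def lineval_def
      by (auto simp: inner_prod_def)
  next
    case False
    then show ?thesis unfolding t evvec_def ev_coords_def by auto
  qed
qed

lemma card_div2_preimage: "card {t. t < 2 * m \<and> P (t div 2)} = 2 * card {j. j < (m::nat) \<and> P j}"
proof -
  have "{t. t < 2 * m \<and> P (t div 2)} = (\<lambda>(j, b). 2 * j + b) ` ({j. j < m \<and> P j} \<times> {0, 1})"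
  proof (rule set_eqI, rule iffI)
    fix t assume "t \<in> {t. t < 2 * m \<and> P (t div 2)}"
    then show "t \<in> (\<lambda>(j, b). 2 * j + b) ` ({j. j < m \<and> P j} \<times> {0, 1})"
      by (intro image_eqI[of _ _ "(t div 2, t mod 2)"]) auto
  qed auto
  moreover have "inj_on (\<lambda>(j, b). 2 * j + b) ({j. j < m \<and> P j} \<times> {0, 1::nat})"
    by (rule inj_onI) (auto; presburger)
  ultimately show ?thesis by (simp add: card_image card_cartesian_product)
qed

lemma card_ev_coords: "finite F \<Longrightarrow> card (ev_coords r s F) = 2 * (r + s) + card F"
  unfolding ev_coords_def by (subst card_Un_disjoint) (auto simp: card_image)

lemma card_ev_coords_at:
  assumes "finite F"
  shows "card {t \<in> ev_coords r s F. ev_vertex r s C t \<in> S}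
       = 2 * card {j. j < r + s \<and> markv C j \<in> S} + card {i\<in>F. endv C i \<in> S}"
proof -
  have "{t \<in> ev_coords r s F. ev_vertex r s C t \<in> S}
      = {t. t < 2 * (r + s) \<and> markv C (t div 2) \<in> S} \<union> (\<lambda>i. i + 2 * (r + s)) ` {i\<in>F. endv C i \<in> S}"
    unfolding ev_coords_def ev_vertex_def by auto
  moreover have "card ({t. t < 2 * (r + s) \<and> markv C (t div 2) \<in> S}
        \<union> (\<lambda>i. i + 2 * (r + s)) ` {i\<in>F. endv C i \<in> S})
      = card {t. t < 2 * (r + s) \<and> markv C (t div 2) \<in> S} + card {i\<in>F. endv C i \<in> S}"
    using assms by (subst card_Un_disjoint) (auto simp: card_image)
  ultimately show ?thesis using card_div2_preimage[of "r + s" "\<lambda>j. markv C j \<in> S"] by simp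
qed

lemma is_curve_edge_vector:
  assumes c: "is_curve r s \<Delta> C" and e: "(u, w) \<in> bE C"
  shows "\<exists>l>0. vpos C w = vpos C u + l *\<^sub>R map_prod of_int of_int (bdir C u w)"
proof -
  have "\<forall>u w. (u, w) \<in> bE C \<longrightarrow> (\<exists>l::real. l > 0 \<and>
           fst (vpos C w) - fst (vpos C u) = l * of_int (fst (bdir C u w)) \<and>
           snd (vpos C w) - snd (vpos C u) = l * of_int (snd (bdir C u w)))"
    using c unfolding is_curve_def by (elim conjE) (metis (no_types, lifting))
  then obtain l where "l > 0" "fst (vpos C w) - fst (vpos C u) = l * of_int (fst (bdir C u w))"
    "snd (vpos C w) - snd (vpos C u) = l * of_int (snd (bdir C u w))"
    using e by blast
  then show ?thesis by (intro exI[of _ l]) (auto simp: prod_eq_iff algebra_simps)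
qed

lemma cell_vpos_path_sum:
  assumes C': "C' \<in> cell r s \<Delta> C" and fin: "finite S" and u0: "u0 \<in> S"
    and par: "\<forall>x\<in>S - {u0}. p x \<in> S \<and> (p x, x) \<in> bE C \<and> ht (p x) < (ht x :: nat)"
  shows "\<exists>L. \<forall>x\<in>S. vpos C' x = vpos C' u0 + (\<Sum>y\<in>S - {u0}.
           if on_root_path S u0 p x y then L y *\<^sub>R map_prod of_int of_int (bdir C (p y) y) else 0)"
proof -
  have "\<forall>y\<in>S - {u0}. \<exists>l. vpos C' y = vpos C' (p y) + l *\<^sub>R map_prod of_int of_int (bdir C (p y) y)"
  proof
    fix y assume y: "y \<in> S - {u0}"
    have e: "(p y, y) \<in> bE C" using par y by blast
    have c': "is_curve r s \<Delta> C'" and E': "bE C' = bE C"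
      and d: "\<forall>(u, w)\<in>bE C. bdir C' u w = bdir C u w"
      using C' unfolding cell_def by blast+
    have "(p y, y) \<in> bE C'" using e E' by simp
    then obtain l where "vpos C' y = vpos C' (p y) + l *\<^sub>R map_prod of_int of_int (bdir C' (p y) y)"
      using is_curve_edge_vector[OF c'] by blast
    moreover have "bdir C' (p y) y = bdir C (p y) y" using d e by blast
    ultimately show "\<exists>l. vpos C' y = vpos C' (p y) + l *\<^sub>R map_prod of_int of_int (bdir C (p y) y)"
      by (intro exI[of _ l]) simp
  qed
  from bchoice[OF this] obtain L
    where L: "\<forall>y\<in>S - {u0}. vpos C' y = vpos C' (p y) + L y *\<^sub>R map_prod of_int of_int (bdir C (p y) y)"
    by blast
  show ?thesis
    by (intro exI[of _ L] ballI eq_root_plus_path_sum[OF fin u0, where ht = ht]) (use par L in auto)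
qed

lemma evvec_cell_root_linear:
  assumes C': "C' \<in> cell r s \<Delta> C" and F: "F \<subseteq> {..<length \<Delta>}" and fS: "finite S" and u0: "u0 \<in> S"
    and par: "\<forall>x\<in>S - {u0}. p x \<in> S \<and> (p x, x) \<in> bE C \<and> ht (p x) < (ht x :: nat)"
  shows "\<exists>L. \<forall>t \<in> ev_coords r s F. ev_vertex r s C t \<in> S \<longrightarrow>
           evvec r s \<Delta> F C' t = ev_direction r s \<Delta> t \<bullet> vpos C' u0
             + (\<Sum>y\<in>S - {u0}. L y * (if on_root_path S u0 p (ev_vertex r s C t) y
                  then ev_direction r s \<Delta> t \<bullet> map_prod of_int of_int (bdir C (p y) y) else 0))"
proof -
  obtain L where L: "\<forall>x\<in>S. vpos C' x = vpos C' u0 + (\<Sum>y\<in>S - {u0}.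
      if on_root_path S u0 p x y then L y *\<^sub>R map_prod of_int of_int (bdir C (p y) y) else 0)"
    using cell_vpos_path_sum[OF C' fS u0 par] by blast
  show ?thesis
    by (intro exI[of _ L] ballI impI)
      (simp add: evvec_cell[OF C' F] L inner_add_right inner_sum_right if_distrib cong: if_cong)
qed

text \<open>Within a cell, the coordinates read off in a subtree \<open>S\<close> depend linearly on the root
  position and the \<open>|S| - 1\<close> edge lengths of \<open>S\<close>; the remaining coordinates are spanned by unit
  vectors.\<close>
definition ev_generators :: "nat \<Rightarrow> nat \<Rightarrow> (int \<times> int) list \<Rightarrow> nat set \<Rightarrow> pcurve \<Rightarrow> nat set \<Rightarrow> nat \<Rightarrow>
    (nat \<Rightarrow> nat) \<Rightarrow> (nat \<Rightarrow> real) set" where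
  "ev_generators r s \<Delta> F C S u0 p =
     (let inS = (\<lambda>t. t \<in> ev_coords r s F \<and> ev_vertex r s C t \<in> S) in
      {\<lambda>t. if inS t then fst (ev_direction r s \<Delta> t) else 0,
       \<lambda>t. if inS t then snd (ev_direction r s \<Delta> t) else 0}
      \<union> (\<lambda>y t. if inS t \<and> on_root_path S u0 p (ev_vertex r s C t) y
          then ev_direction r s \<Delta> t \<bullet> map_prod of_int of_int (bdir C (p y) y) else 0) ` (S - {u0})
      \<union> (\<lambda>t0 t. if t = t0 then 1 else 0) ` {t \<in> ev_coords r s F. ev_vertex r s C t \<notin> S})"

lemma card_ev_generators:
  assumes F: "F \<subseteq> {..<length \<Delta>}" and fS: "finite S" and u0: "u0 \<in> S"
  shows "finite (ev_generators r s \<Delta> F C S u0 p)"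
    and "card (ev_generators r s \<Delta> F C S u0 p)
         \<le> card S + 1 + card {t \<in> ev_coords r s F. ev_vertex r s C t \<notin> S}"
proof -
  define B where "B = {t \<in> ev_coords r s F. ev_vertex r s C t \<notin> S}"
  obtain e1 e2 g coord where G: "ev_generators r s \<Delta> F C S u0 p = {e1, e2} \<union> g ` (S - {u0}) \<union> coord ` B"
    unfolding ev_generators_def Let_def B_def by blast
  have fB: "finite B" using finite_subset[OF F] unfolding B_def ev_coords_def by simp
  then show "finite (ev_generators r s \<Delta> F C S u0 p)" unfolding G using fS by simp
  have "card {e1, e2} \<le> 2" by (cases "e1 = e2") auto
  then have "card (ev_generators r s \<Delta> F C S u0 p) \<le> 2 + card (g ` (S - {u0})) + card (coord ` B)"
    using card_Un_le[of "{e1, e2} \<union> g ` (S - {u0})" "coord ` B"]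
      card_Un_le[of "{e1, e2}" "g ` (S - {u0})"] unfolding G by linarith
  moreover have "card (g ` (S - {u0})) + 1 \<le> card S"
    using card_image_le[of "S - {u0}" g] card_Suc_Diff1[OF fS u0] fS by simp
  ultimately show "card (ev_generators r s \<Delta> F C S u0 p)
      \<le> card S + 1 + card {t \<in> ev_coords r s F. ev_vertex r s C t \<notin> S}"
    using card_image_le[OF fB, of coord] unfolding B_def by linarith
qed

lemma evvec_cell_in_span:
  assumes C': "C' \<in> cell r s \<Delta> C" and F: "F \<subseteq> {..<length \<Delta>}" and fS: "finite S" and u0: "u0 \<in> S"
    and par: "\<forall>x\<in>S - {u0}. p x \<in> S \<and> (p x, x) \<in> bE C \<and> ht (p x) < (ht x :: nat)"
  shows "evvec r s \<Delta> F C' \<in> fun_vs.span (ev_generators r s \<Delta> F C S u0 p)"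
proof -
  define B where "B = {t \<in> ev_coords r s F. ev_vertex r s C t \<notin> S}"
  define inS where "inS t \<longleftrightarrow> t \<in> ev_coords r s F \<and> ev_vertex r s C t \<in> S" for t
  define coord :: "nat \<Rightarrow> nat \<Rightarrow> real" where "coord t0 t = (if t = t0 then 1 else 0)" for t0 t
  define e1 where "e1 = (\<lambda>t. if inS t then fst (ev_direction r s \<Delta> t) else 0)"
  define e2 where "e2 = (\<lambda>t. if inS t then snd (ev_direction r s \<Delta> t) else 0)"
  define g where "g y = (\<lambda>t. if inS t \<and> on_root_path S u0 p (ev_vertex r s C t) y
      then ev_direction r s \<Delta> t \<bullet> map_prod of_int of_int (bdir C (p y) y) else 0)" for y
  have G: "ev_generators r s \<Delta> F C S u0 p = {e1, e2} \<union> g ` (S - {u0}) \<union> coord ` B"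
    unfolding ev_generators_def Let_def B_def inS_def coord_def e1_def e2_def g_def by simp
  have fB: "finite B" using finite_subset[OF F] unfolding B_def ev_coords_def by simp
  obtain L where L: "\<forall>t \<in> ev_coords r s F. ev_vertex r s C t \<in> S \<longrightarrow>
      evvec r s \<Delta> F C' t = fst (vpos C' u0) * e1 t + snd (vpos C' u0) * e2 t
        + (\<Sum>y\<in>S - {u0}. L y * g y t)"
    using evvec_cell_root_linear[OF C' F fS u0 par]
    unfolding e1_def e2_def g_def inS_def by (auto simp: inner_prod_def mult.commute)
  have pointwise: "evvec r s \<Delta> F C' t = (\<Sum>t0\<in>B. evvec r s \<Delta> F C' t0 * coord t0 t)
      + (fst (vpos C' u0) * e1 t + snd (vpos C' u0) * e2 t) + (\<Sum>y\<in>S - {u0}. L y * g y t)" for t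
  proof (cases "inS t")
    case True
    then have "(\<Sum>t0\<in>B. evvec r s \<Delta> F C' t0 * coord t0 t) = 0"
      unfolding coord_def B_def inS_def by (intro sum.neutral) auto
    then show ?thesis using L True unfolding inS_def by simp
  next
    case False
    then have "e1 t = 0" "e2 t = 0" "g y t = 0" for y unfolding e1_def e2_def g_def by auto
    moreover have "(\<Sum>t0\<in>B. evvec r s \<Delta> F C' t0 * coord t0 t)
        = (if t \<in> B then evvec r s \<Delta> F C' t else 0)"
      unfolding coord_def using fB by (simp add: if_distrib sum.delta cong: if_cong)
    moreover have "t \<notin> B \<Longrightarrow> evvec r s \<Delta> F C' t = 0"
      using False evvec_cell[OF C' F, of t] unfolding B_def inS_def by auto
    ultimately show ?thesis by auto
  qed
  have "evvec r s \<Delta> F C' = (\<Sum>t0\<in>B. fun_scale (evvec r s \<Delta> F C' t0) (coord t0))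
      + (fun_scale (fst (vpos C' u0)) e1 + fun_scale (snd (vpos C' u0)) e2)
      + (\<Sum>y\<in>S - {u0}. fun_scale (L y) (g y))"
    by (rule ext, simp only: plus_fun_apply sum_apply fun_scale_def, rule pointwise)
  also have "\<dots> \<in> fun_vs.span (ev_generators r s \<Delta> F C S u0 p)"
    unfolding G by (intro fun_vs.span_add fun_vs.span_sum fun_vs.span_scale fun_vs.span_base) auto
  finally show ?thesis .
qed

lemma slack_nonneg:
  assumes gp: "gen_pos r s \<Delta> F P" and c: "is_curve r s \<Delta> C" and ev: "ev_eq r s \<Delta> F C P"
    and F: "F \<subseteq> {..<length \<Delta>}"
    and S: "S \<subseteq> {..<nV C}" and u0: "u0 \<in> S" and conn: "\<forall>x\<in>S. (u0, x) \<in> (bE C \<inter> S \<times> S)\<^sup>*"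
  shows "slack r s F C S \<ge> 0"
proof -
  have fF: "finite F" using F finite_subset by blast
  have fS: "finite S" using S finite_subset by blast
  obtain p and ht :: "nat \<Rightarrow> nat"
    where par: "\<forall>x\<in>S - {u0}. p x \<in> S \<and> (p x, x) \<in> bE C \<and> ht (p x) < ht x"
    using exists_parent_function[OF conn] by blast
  let ?G = "ev_generators r s \<Delta> F C S u0 p"
  have "dim_ge (2 * (r + s) + card F) (evvec r s \<Delta> F ` cell r s \<Delta> C)"
    using gp c ev unfolding gen_pos_def by blast
  moreover have "evvec r s \<Delta> F ` cell r s \<Delta> C \<subseteq> fun_vs.span ?G"
    using evvec_cell_in_span[OF _ F fS u0 par] by blast
  ultimately have "2 * (r + s) + card F \<le> card ?G"
    using dim_ge_le_card_span card_ev_generators(1)[OF F fS u0] by blast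
  moreover have "card (ev_coords r s F) = card {t \<in> ev_coords r s F. ev_vertex r s C t \<in> S}
      + card {t \<in> ev_coords r s F. ev_vertex r s C t \<notin> S}"
  proof -
    have "card (ev_coords r s F) = card ({t \<in> ev_coords r s F. ev_vertex r s C t \<in> S}
        \<union> {t \<in> ev_coords r s F. ev_vertex r s C t \<notin> S})"
      by (rule arg_cong[where f = card]) auto
    also have "\<dots> = card {t \<in> ev_coords r s F. ev_vertex r s C t \<in> S}
        + card {t \<in> ev_coords r s F. ev_vertex r s C t \<notin> S}"
      using fF unfolding ev_coords_def by (intro card_Un_disjoint) auto
    finally show ?thesis .
  qed
  ultimately have "2 * card {j. j < r + s \<and> markv C j \<in> S} + card {i\<in>F. endv C i \<in> S} \<le> card S + 1"
    using card_ev_generators(2)[OF F fS u0, where r = r and s = s and C = C and p = p]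
      card_ev_coords[OF fF, of r s] card_ev_coords_at[OF fF, of r s C S] by linarith
  then show ?thesis unfolding slack_def by linarith
qed

section \<open>The broccoli orientation\<close>

lemma (in tree) card_oriented_edges_in_branch:
  assumes ori_E: "\<And>u w. ori u w \<Longrightarrow> (u, w) \<in> E"
    and ori_asym: "\<And>u w. (u, w) \<in> E \<Longrightarrow> ori u w \<longleftrightarrow> \<not> ori w u"
    and e: "(u, w) \<in> E"
  shows "card {(x, y). x \<in> branch E w u \<and> y \<in> branch E w u \<and> ori y x} = card (branch E w u) - 1"
proof -
  define A where "A = branch E w u"
  define H where "H = {(y, x). y \<in> A \<and> x \<in> A \<and> ori y x}"
  define H' where "H' = {(y, x). y \<in> A \<and> x \<in> A \<and> ori x y}"
  have fA: "finite A" using branch_subset edge_in_V[OF e] fin finite_subset unfolding A_def by blast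
  have fH: "finite H" "finite H'"
    unfolding H_def H'_def by (rule finite_subset[of _ "A \<times> A"], use fA in auto)+
  have "E \<inter> A \<times> A \<subseteq> H \<union> H'" using ori_asym unfolding H_def H'_def by blast
  moreover have "H \<union> H' \<subseteq> E \<inter> A \<times> A" using ori_E edge_sym unfolding H_def H'_def by blast
  ultimately have "E \<inter> A \<times> A = H \<union> H'" by (rule subset_antisym)
  moreover have "H \<inter> H' = {}" using ori_E ori_asym unfolding H_def H'_def by blast
  moreover have "card H' = card H"
  proof -
    have "H' = prod.swap ` H" unfolding H_def H'_def by (auto simp: image_def)
    then show ?thesis by (simp add: card_image)
  qed
  ultimately have "card (E \<inter> A \<times> A) = 2 * card H" using fH by (simp add: card_Un_disjoint)
  then show ?thesis using card_branch_edges[OF e] \<open>card H' = card H\<close> unfolding A_def H'_def by simp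
qed

text \<open>Each internal edge of the branch is counted once, the edge \<open>{u, w}\<close> only if it points
  into the branch.\<close>
lemma (in tree) sum_in_degree_branch:
  assumes ori_E: "\<And>u w. ori u w \<Longrightarrow> (u, w) \<in> E"
    and ori_asym: "\<And>u w. (u, w) \<in> E \<Longrightarrow> ori u w \<longleftrightarrow> \<not> ori w u"
    and e: "(u, w) \<in> E"
  shows "(\<Sum>x\<in>branch E w u. card {y. ori y x}) = card (branch E w u) - 1 + (if ori u w then 1 else 0)"
proof -
  define A where "A = branch E w u"
  have fA: "finite A" using branch_subset edge_in_V[OF e] fin finite_subset unfolding A_def by blast
  have wA: "w \<in> A" and uA: "u \<notin> A"
    using branch_refl other_end_not_in_branch[OF edge_sym[OF e]] unfolding A_def by auto
  have fin_in: "finite {y. ori y x}" for x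
    by (rule finite_subset[of _ V]) (use ori_E edge_in_V fin in blast)+
  have into_A: "y \<in> A \<or> (y, x) = (u, w)" if "x \<in> A" "ori y x" for x y
  proof (rule ccontr)
    assume out: "\<not> (y \<in> A \<or> (y, x) = (u, w))"
    moreover have "(y, x) \<in> E" using ori_E that(2) .
    ultimately have "(y, x) \<in> del_edge E w u" using that(1) uA unfolding del_edge_def by auto
    then show False using branch_step_back[OF sy] that(1) out unfolding A_def by blast
  qed
  define In where "In = {(x, y). x \<in> A \<and> y \<in> A \<and> ori y x}"
  have "Sigma A (\<lambda>x. {y. ori y x}) = In \<union> (if ori u w then {(w, u)} else {})"
  proof (cases "ori u w")
    case True then show ?thesis using into_A wA unfolding In_def by auto
  next
    case False then show ?thesis using into_A unfolding In_def by auto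
  qed
  moreover have "In \<inter> (if ori u w then {(w, u)} else {}) = {}" using uA unfolding In_def by auto
  moreover have "card In = card A - 1"
    using card_oriented_edges_in_branch[OF ori_E ori_asym e] unfolding A_def In_def .
  moreover have "finite In" unfolding In_def by (rule finite_subset[of _ "A \<times> A"]) (use fA in auto)
  ultimately have "card (Sigma A (\<lambda>x. {y. ori y x})) = card A - 1 + (if ori u w then 1 else 0)"
    by (simp add: card_Un_disjoint)
  then show ?thesis using card_SigmaI[OF fA, of "\<lambda>x. {y. ori y x}"] fin_in unfolding A_def by simp
qed

lemma valid_oriD:
  assumes "valid_ori C ori"
  shows "\<And>u w. ori u w \<Longrightarrow> (u, w) \<in> bE C"
    "\<And>u w. (u, w) \<in> bE C \<Longrightarrow> ori u w \<longleftrightarrow> \<not> ori w u"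
  using assms unfolding valid_ori_def by auto

lemma or_broccoli_unor_broccoli: "or_broccoli r s \<Delta> F (C, ori) \<Longrightarrow> unor_broccoli r s \<Delta> C"
  unfolding or_broccoli_def unor_broccoli_def typeI_def typeII_def typeIII_def
    typeI'_def typeII'_def typeIII'_def by auto

lemma mult_or_eq_mult_un:
  assumes ob: "or_broccoli r s \<Delta> F (C, ori)"
  shows "mult_or r s \<Delta> F y (C, ori) = mult_un r s \<Delta> F y C"
proof -
  have "mV_or r s \<Delta> F C ori y v = mV_un r s \<Delta> C y v" if "v < nV C" for v
    using ob that unfolding or_broccoli_def mV_or_def mV_un_def typeI_def typeII_def typeIII_def
      typeI'_def typeII'_def typeIII'_def by auto
  then show ?thesis unfolding mult_or_def mult_un_def by simp
qed

definition slack_orientation :: "nat \<Rightarrow> nat \<Rightarrow> nat set \<Rightarrow> pcurve \<Rightarrow> nat \<Rightarrow> nat \<Rightarrow> bool" where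
  "slack_orientation r s F C u w \<longleftrightarrow> (u, w) \<in> bE C \<and> slack r s F C (branch (bE C) w u) = 1"

context broccoli_setting
begin

lemma card_ins:
  assumes c: "is_curve r s \<Delta> C" and vo: "valid_ori C ori"
  shows "card (ins \<Delta> F C ori x) = card {y. ori y x} + fixed_ends_at F C x"
proof -
  have sy: "sym (bE C)" using c unfolding is_curve_def by auto
  have in_edge: "(x, y) \<in> bE C \<and> \<not> ori x y \<longleftrightarrow> ori y x" for y
    using valid_oriD[OF vo, of x y] valid_oriD[OF vo, of y x] symD[OF sy, of x y] symD[OF sy, of y x]
    by blast
  have "ins \<Delta> F C ori x = Inl ` {y. ori y x} \<union> Inr ` {i\<in>F. endv C i = x}"
  proof (rule set_eqI)
    fix f show "f \<in> ins \<Delta> F C ori x \<longleftrightarrow> f \<in> Inl ` {y. ori y x} \<union> Inr ` {i\<in>F. endv C i = x}"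
      using in_edge F_sub by (cases f) (auto simp: ins_def flags_def outgoing_def)
  qed
  moreover have "finite {y. ori y x}"
    by (rule finite_subset[of _ "{..<nV C}"]) (use valid_oriD(1)[OF vo] c in \<open>auto simp: is_curve_def\<close>)
  moreover have "card (Inl ` {y. ori y x} \<union> Inr ` {i\<in>F. endv C i = x} :: (nat + nat) set)
      = card (Inl ` {y. ori y x} :: (nat + nat) set) + card (Inr ` {i\<in>F. endv C i = x} :: (nat + nat) set)"
    using finite_F calculation(2) by (intro card_Un_disjoint) auto
  ultimately show ?thesis unfolding fixed_ends_at_def by (simp add: card_image)
qed

lemma card_ins_or_broccoli:
  assumes "or_broccoli r s \<Delta> F (C, ori)" and "x < nV C"
  shows "card (ins \<Delta> F C ori x) = req_in_flags r s \<Delta> C x"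
  using assms unfolding or_broccoli_def req_in_flags_def typeI_def typeII_def typeIII_def typeII'_def
  by auto

lemma or_broccoli_orientation:
  assumes ob: "or_broccoli r s \<Delta> F (C, ori)" and e: "(u, w) \<in> bE C"
  shows "ori u w \<longleftrightarrow> slack r s F C (branch (bE C) w u) = 1"
proof -
  have b: "unor_broccoli r s \<Delta> C" using or_broccoli_unor_broccoli[OF ob] .
  have c: "is_curve r s \<Delta> C" using b unor_broccoli_is_curve by auto
  have vo: "valid_ori C ori" using ob unfolding or_broccoli_def by auto
  interpret T: tree "{..<nV C}" "bE C" by (rule is_curve_tree[OF c])
  define A where "A = branch (bE C) w u"
  have AV: "A \<subseteq> {..<nV C}" using T.branch_subset T.edge_in_V[OF e] unfolding A_def by auto
  have "(\<Sum>x\<in>A. req_in_flags r s \<Delta> C x) = (\<Sum>x\<in>A. card {y. ori y x}) + (\<Sum>x\<in>A. fixed_ends_at F C x)"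
    using card_ins_or_broccoli[OF ob] card_ins[OF c vo] AV
    by (simp add: sum.distrib[symmetric] subset_iff cong: sum.cong)
  moreover have fA: "finite A" using AV finite_subset by blast
  moreover have "card A \<noteq> 0" using fA branch_refl[of w "bE C" u] A_def by auto
  moreover note T.sum_in_degree_branch[where ori = ori, OF valid_oriD[OF vo] e, folded A_def]
    sum_req_in_flags[OF b AV] sum_fixed_ends_at[OF fA, of C]
  ultimately have "card A + 1 = 2 * card {j. j < r + s \<and> markv C j \<in> A} + card {i\<in>F. endv C i \<in> A}
      + (if ori u w then 1 else 0)"
    by arith
  then have "slack r s F C A = (if ori u w then 1 else 0)"
    unfolding slack_def by (simp split: if_splits)
  then show ?thesis unfolding A_def by simp
qed

lemma or_broccoli_orientation_unique:
  assumes "or_broccoli r s \<Delta> F (C, ori)"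
  shows "ori = slack_orientation r s F C"
proof (intro ext)
  fix u w
  have "valid_ori C ori" using assms unfolding or_broccoli_def by auto
  then show "ori u w = slack_orientation r s F C u w"
    using or_broccoli_orientation[OF assms] valid_oriD unfolding slack_orientation_def by blast
qed

lemma slack_branch_nonneg:
  assumes gp: "gen_pos r s \<Delta> F P" and c: "is_curve r s \<Delta> C" and ev: "ev_eq r s \<Delta> F C P"
    and e: "(u, w) \<in> bE C"
  shows "slack r s F C (branch (bE C) u w) \<ge> 0"
proof -
  interpret T: tree "{..<nV C}" "bE C" by (rule is_curve_tree[OF c])
  show ?thesis
    using slack_nonneg[OF gp c ev F_sub T.branch_subset branch_refl] T.edge_in_V[OF e]
      branch_connected[of _ "bE C" u w] by blast
qed

lemma in_degree_slack_orientation: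
  assumes gp: "gen_pos r s \<Delta> F P" and b: "unor_broccoli r s \<Delta> C" and ev: "ev_eq r s \<Delta> F C P"
    and x: "x < nV C"
  shows "card {y. slack_orientation r s F C y x} + fixed_ends_at F C x = req_in_flags r s \<Delta> C x"
proof -
  have c: "is_curve r s \<Delta> C" using b unor_broccoli_is_curve by auto
  interpret T: tree "{..<nV C}" "bE C" by (rule is_curve_tree[OF c])
  define N where "N = {y. (x, y) \<in> bE C}"
  define D where "D y = slack r s F C (branch (bE C) y x)" for y
  have fN: "finite N" unfolding N_def by (rule finite_subset[of _ "{..<nV C}"]) (use T.edge_in_V in auto)
  have D01: "D y = 0 \<or> D y = 1" if "y \<in> N" for y
  proof -
    have e: "(x, y) \<in> bE C" using that N_def by auto
    have "D y \<ge> 0" "slack r s F C (branch (bE C) x y) \<ge> 0"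
      using slack_branch_nonneg[OF gp c ev] e T.edge_sym unfolding D_def by auto
    then show ?thesis using slack_branches[OF b e] unfolding D_def by linarith
  qed
  have in_nbrs: "{y. slack_orientation r s F C y x} = {y\<in>N. D y = 0}"
    using slack_branches[OF b] T.edge_sym unfolding slack_orientation_def N_def D_def by force
  have "(\<Sum>y\<in>N. D y) = int (card {y\<in>N. D y = 1})"
  proof -
    have "(\<Sum>y\<in>N. D y) = (\<Sum>y\<in>N. if D y = 1 then 1 else 0)" using D01 by (intro sum.cong) auto
    then show ?thesis using sum.inter_filter[OF fN, of "\<lambda>_. 1::int" "\<lambda>y. D y = 1"] by simp
  qed
  moreover have "card {y\<in>N. D y = 0} + card {y\<in>N. D y = 1} = card N"
  proof -
    have "card N = card ({y\<in>N. D y = 0} \<union> {y\<in>N. D y = 1})"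
      using D01 by (intro arg_cong[where f = card]) auto
    also have "\<dots> = card {y\<in>N. D y = 0} + card {y\<in>N. D y = 1}"
      using fN by (intro card_Un_disjoint) auto
    finally show ?thesis by simp
  qed
  ultimately have "card {y\<in>N. D y = 0} + fixed_ends_at F C x = req_in_flags r s \<Delta> C x"
    using sum_slack_branches_at_vertex[OF b x] unfolding N_def[symmetric] D_def[symmetric] by linarith
  then show ?thesis unfolding in_nbrs .
qed

lemma or_broccoli_slack_orientation:
  assumes gp: "gen_pos r s \<Delta> F P" and b: "unor_broccoli r s \<Delta> C" and ev: "ev_eq r s \<Delta> F C P"
  shows "or_broccoli r s \<Delta> F (C, slack_orientation r s F C)"
proof -
  have c: "is_curve r s \<Delta> C" using b unor_broccoli_is_curve by auto
  interpret T: tree "{..<nV C}" "bE C" by (rule is_curve_tree[OF c])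
  have flip: "slack_orientation r s F C u w \<longleftrightarrow> \<not> slack_orientation r s F C w u"
    if e: "(u, w) \<in> bE C" for u w
  proof -
    have "slack r s F C (branch (bE C) u w) \<ge> 0" "slack r s F C (branch (bE C) w u) \<ge> 0"
      using slack_branch_nonneg[OF gp c ev] e T.edge_sym[OF e] by auto
    then show ?thesis
      using slack_branches[OF b e] T.edge_sym[OF e] e unfolding slack_orientation_def by auto
  qed
  have vo: "valid_ori C (slack_orientation r s F C)"
    unfolding valid_ori_def using flip slack_orientation_def by blast
  show ?thesis unfolding or_broccoli_def prod.case
  proof (intro conjI c vo allI impI)
    fix v assume v: "v < nV C"
    have "card (ins \<Delta> F C (slack_orientation r s F C) v) = req_in_flags r s \<Delta> C v"
      using card_ins[OF c vo] in_degree_slack_orientation[OF gp b ev v] by simp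
    moreover have "finite (ins \<Delta> F C (slack_orientation r s F C) v)"
      using finite_flags[OF c] unfolding ins_def by auto
    ultimately show "typeI r s \<Delta> F C (slack_orientation r s F C) v
        \<or> typeII r s \<Delta> F C (slack_orientation r s F C) v \<or> typeIII r s \<Delta> F C (slack_orientation r s F C) v"
      using unor_broccoli_vertex_types[OF b v] unfolding req_in_flags_def typeI_def typeII_def
        typeIII_def typeI'_def typeII'_def typeIII'_def by auto
  qed
qed

end

section \<open>Isomorphisms and the comparison of the counts\<close>

locale curve_isomorphism =
  fixes r s :: nat and \<Delta> :: "(int \<times> int) list" and C C' :: pcurve and \<sigma> :: "nat \<Rightarrow> nat"
  assumes iso: "curve_iso r s \<Delta> C C' \<sigma>" and curve: "is_curve r s \<Delta> C"
begin

lemma bij_vertices: "bij_betw \<sigma> {..<nV C} {..<nV C'}"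
  using iso unfolding curve_iso_def by auto

lemma inj_vertices: "inj_on \<sigma> {..<nV C}"
  by (rule bij_betw_imp_inj_on[OF bij_vertices])

lemma image_vertices: "\<sigma> ` {..<nV C} = {..<nV C'}"
  by (rule bij_betw_imp_surj_on[OF bij_vertices])

lemma eq_iff: "u < nV C \<Longrightarrow> w < nV C \<Longrightarrow> \<sigma> u = \<sigma> w \<longleftrightarrow> u = w"
  using inj_vertices inj_on_eq_iff by fastforce

lemma edges_image: "bE C' = (\<lambda>(u, w). (\<sigma> u, \<sigma> w)) ` bE C"
  using iso unfolding curve_iso_def by auto

lemma edges_subset: "bE C \<subseteq> {..<nV C} \<times> {..<nV C}"
  using curve unfolding is_curve_def by auto

lemma bdir_image: "(u, w) \<in> bE C \<Longrightarrow> bdir C' (\<sigma> u) (\<sigma> w) = bdir C u w"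
  using iso unfolding curve_iso_def by auto

lemma endv_image: "i < length \<Delta> \<Longrightarrow> endv C' i = \<sigma> (endv C i)"
  using iso unfolding curve_iso_def by auto

lemma markv_image: "j < r + s \<Longrightarrow> markv C' j = \<sigma> (markv C j)"
  using iso unfolding curve_iso_def by auto

lemma neighbours_image:
  assumes v: "v < nV C"
  shows "{x. (\<sigma> v, x) \<in> bE C'} = \<sigma> ` {w. (v, w) \<in> bE C}"
proof (rule set_eqI, rule iffI)
  fix x assume "x \<in> {x. (\<sigma> v, x) \<in> bE C'}"
  then obtain a b where ab: "(a, b) \<in> bE C" "\<sigma> a = \<sigma> v" "\<sigma> b = x" unfolding edges_image by auto
  then have "a = v" using edges_subset eq_iff v by auto
  then show "x \<in> \<sigma> ` {w. (v, w) \<in> bE C}" using ab by auto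
next
  fix x assume "x \<in> \<sigma> ` {w. (v, w) \<in> bE C}"
  then show "x \<in> {x. (\<sigma> v, x) \<in> bE C'}" unfolding edges_image by auto
qed

lemma ends_image:
  "v < nV C \<Longrightarrow> {i. i < length \<Delta> \<and> endv C' i = \<sigma> v} = {i. i < length \<Delta> \<and> endv C i = v}"
  using endv_image eq_iff curve unfolding is_curve_def by auto

lemma flags_image: "v < nV C \<Longrightarrow> flags \<Delta> C' (\<sigma> v) = map_sum \<sigma> id ` flags \<Delta> C v"
  unfolding flags_def using neighbours_image ends_image by (simp add: image_Un image_image)

lemma flag_vertex_less: "f \<in> flags \<Delta> C v \<Longrightarrow> (case f of Inl w \<Rightarrow> w < nV C | Inr i \<Rightarrow> True)"
  unfolding flags_def using edges_subset by auto

lemma inj_on_flags: "v < nV C \<Longrightarrow> inj_on (map_sum \<sigma> id) (flags \<Delta> C v)"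
proof (rule inj_onI)
  fix f g assume f: "f \<in> flags \<Delta> C v" and g: "g \<in> flags \<Delta> C v"
    and e: "map_sum \<sigma> id f = map_sum \<sigma> id g"
  show "f = g" using flag_vertex_less[OF f] flag_vertex_less[OF g] e eq_iff by (cases f; cases g) auto
qed

lemma card_flags_image: "v < nV C \<Longrightarrow> card (flags \<Delta> C' (\<sigma> v)) = card (flags \<Delta> C v)"
  using flags_image inj_on_flags card_image by metis

lemma marks_image: "v < nV C \<Longrightarrow> marks r s C' (\<sigma> v) = marks r s C v"
  unfolding marks_def using markv_image eq_iff markv_less[OF curve] by auto

lemma odir_image:
  "v < nV C \<Longrightarrow> f \<in> flags \<Delta> C v \<Longrightarrow> odir \<Delta> C' (\<sigma> v) (map_sum \<sigma> id f) = odir \<Delta> C v f"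
  unfolding odir_def flags_def using bdir_image by auto

lemma mikh_image:
  assumes v: "v < nV C"
  shows "mikh \<Delta> C' (\<sigma> v) = mikh \<Delta> C v"
proof -
  have "{nat \<bar>det2 (odir \<Delta> C' (\<sigma> v) f) (odir \<Delta> C' (\<sigma> v) g)\<bar> | f g.
          f \<in> flags \<Delta> C' (\<sigma> v) \<and> g \<in> flags \<Delta> C' (\<sigma> v) \<and> f \<noteq> g}
      = {nat \<bar>det2 (odir \<Delta> C v f) (odir \<Delta> C v g)\<bar> | f g.
          f \<in> flags \<Delta> C v \<and> g \<in> flags \<Delta> C v \<and> f \<noteq> g}" (is "?L = ?R")
  proof (rule set_eqI, rule iffI)
    fix z assume "z \<in> ?L"
    then obtain f g where fg: "z = nat \<bar>det2 (odir \<Delta> C' (\<sigma> v) f) (odir \<Delta> C' (\<sigma> v) g)\<bar>"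
      "f \<in> flags \<Delta> C' (\<sigma> v)" "g \<in> flags \<Delta> C' (\<sigma> v)" "f \<noteq> g" by blast
    obtain f0 where f0: "f0 \<in> flags \<Delta> C v" "f = map_sum \<sigma> id f0"
      using fg(2) flags_image[OF v] by auto
    obtain g0 where g0: "g0 \<in> flags \<Delta> C v" "g = map_sum \<sigma> id g0"
      using fg(3) flags_image[OF v] by auto
    have "f0 \<noteq> g0" using fg(4) f0 g0 by auto
    moreover have "z = nat \<bar>det2 (odir \<Delta> C v f0) (odir \<Delta> C v g0)\<bar>"
      using fg(1) f0 g0 odir_image[OF v] by simp
    ultimately show "z \<in> ?R" using f0 g0 by blast
  next
    fix z assume "z \<in> ?R"
    then obtain f g where fg: "z = nat \<bar>det2 (odir \<Delta> C v f) (odir \<Delta> C v g)\<bar>"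
      "f \<in> flags \<Delta> C v" "g \<in> flags \<Delta> C v" "f \<noteq> g" by blast
    have "map_sum \<sigma> id f \<noteq> map_sum \<sigma> id g"
      using inj_on_flags[OF v] fg(2-4) inj_on_eq_iff by metis
    moreover have "map_sum \<sigma> id f \<in> flags \<Delta> C' (\<sigma> v)" "map_sum \<sigma> id g \<in> flags \<Delta> C' (\<sigma> v)"
      using fg flags_image[OF v] by auto
    moreover have "z = nat \<bar>det2 (odir \<Delta> C' (\<sigma> v) (map_sum \<sigma> id f))
        (odir \<Delta> C' (\<sigma> v) (map_sum \<sigma> id g))\<bar>"
      using fg odir_image[OF v] by simp
    ultimately show "z \<in> ?L" by blast
  qed
  then show ?thesis unfolding mikh_def by simp
qed

lemma mV_un_image:
  assumes v: "v < nV C"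
  shows "mV_un r s \<Delta> C' y (\<sigma> v) = mV_un r s \<Delta> C y v"
  unfolding mV_un_def typeI'_def typeII'_def typeIII'_def
  using card_flags_image[OF v] marks_image[OF v] mikh_image[OF v] by auto

lemma mult_un_eq: "mult_un r s \<Delta> F y C' = mult_un r s \<Delta> F y C"
proof -
  have "(\<Prod>v<nV C'. mV_un r s \<Delta> C' y v) = (\<Prod>v\<in>\<sigma> ` {..<nV C}. mV_un r s \<Delta> C' y v)"
    using image_vertices by simp
  also have "\<dots> = (\<Prod>v<nV C. mV_un r s \<Delta> C' y (\<sigma> v))"
    by (rule prod.reindex[OF inj_vertices, unfolded comp_def])
  also have "\<dots> = (\<Prod>v<nV C. mV_un r s \<Delta> C y v)" by (rule prod.cong) (auto simp: mV_un_image)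
  finally show ?thesis unfolding mult_un_def by simp
qed

definition transport :: "(nat \<Rightarrow> nat \<Rightarrow> bool) \<Rightarrow> nat \<Rightarrow> nat \<Rightarrow> bool" where
  "transport ori a b \<longleftrightarrow> (\<exists>u w. (u, w) \<in> bE C \<and> a = \<sigma> u \<and> b = \<sigma> w \<and> ori u w)"

lemma transport_edge: "(u, w) \<in> bE C \<Longrightarrow> transport ori (\<sigma> u) (\<sigma> w) \<longleftrightarrow> ori u w"
  unfolding transport_def using edges_subset eq_iff by blast

lemma valid_ori_transport:
  assumes vo: "valid_ori C ori"
  shows "valid_ori C' (transport ori)"
  unfolding valid_ori_def
proof (intro conjI allI impI)
  fix a b assume "transport ori a b"
  then show "(a, b) \<in> bE C'" unfolding transport_def edges_image by auto
next
  fix a b assume "(a, b) \<in> bE C'"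
  then obtain u w where uw: "(u, w) \<in> bE C" "a = \<sigma> u" "b = \<sigma> w" unfolding edges_image by auto
  have "(w, u) \<in> bE C" using uw(1) curve unfolding is_curve_def by (auto dest: symD)
  then show "transport ori a b \<longleftrightarrow> \<not> transport ori b a"
    using transport_edge[OF uw(1)] transport_edge valid_oriD(2)[OF vo uw(1)] uw by blast
qed

lemma ins_transport:
  assumes v: "v < nV C"
  shows "ins \<Delta> F C' (transport ori) (\<sigma> v) = map_sum \<sigma> id ` ins \<Delta> F C ori v"
proof -
  have "outgoing F (transport ori) (\<sigma> v) (map_sum \<sigma> id f) = outgoing F ori v f"
    if "f \<in> flags \<Delta> C v" for f
    using that transport_edge unfolding outgoing_def flags_def by auto
  then show ?thesis unfolding ins_def flags_image[OF v] by auto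
qed

lemma card_ins_transport:
  assumes v: "v < nV C"
  shows "card (ins \<Delta> F C' (transport ori) (\<sigma> v)) = card (ins \<Delta> F C ori v)"
proof -
  have "inj_on (map_sum \<sigma> id) (ins \<Delta> F C ori v)"
    by (rule inj_on_subset[OF inj_on_flags[OF v]]) (auto simp: ins_def)
  then show ?thesis unfolding ins_transport[OF v] by (rule card_image)
qed

lemma or_broccoli_transport:
  assumes ob: "or_broccoli r s \<Delta> F (C, ori)" and c': "is_curve r s \<Delta> C'"
  shows "or_broccoli r s \<Delta> F (C', transport ori)"
  unfolding or_broccoli_def prod.case
proof (intro conjI c' valid_ori_transport allI impI)
  show "valid_ori C ori" using ob unfolding or_broccoli_def by auto
  fix a assume "a < nV C'"
  then obtain v where v: "v < nV C" "a = \<sigma> v" using image_vertices by auto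
  have "typeI r s \<Delta> F C ori v \<or> typeII r s \<Delta> F C ori v \<or> typeIII r s \<Delta> F C ori v"
    using ob v unfolding or_broccoli_def by auto
  then show "typeI r s \<Delta> F C' (transport ori) a \<or> typeII r s \<Delta> F C' (transport ori) a
      \<or> typeIII r s \<Delta> F C' (transport ori) a"
    unfolding v(2) typeI_def typeII_def typeIII_def
    using card_flags_image[OF v(1)] marks_image[OF v(1)] card_ins_transport[OF v(1)]
      ins_transport[OF v(1)] by simp
qed

end

lemma curve_iso_id: "curve_iso r s \<Delta> C C id"
  unfolding curve_iso_def by (auto simp: bij_betw_def image_iff)

lemma mult_un_iso_un:
  assumes "(C, C') \<in> iso_un r s \<Delta>" and "is_curve r s \<Delta> C"
  shows "mult_un r s \<Delta> F y C' = mult_un r s \<Delta> F y C"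
  using assms curve_isomorphism.mult_un_eq unfolding iso_un_def curve_isomorphism_def by blast

lemma bij_betw_quotient_image:
  assumes bij: "bij_betw f A B"
    and rel: "\<And>a a'. a \<in> A \<Longrightarrow> a' \<in> A \<Longrightarrow> (f a, f a') \<in> R' \<longleftrightarrow> (a, a') \<in> R"
  shows "bij_betw (image f) (A // (R \<inter> A \<times> A)) (B // (R' \<inter> B \<times> B))"
proof -
  let ?RA = "R \<inter> A \<times> A" and ?RB = "R' \<inter> B \<times> B"
  have fA: "f ` A = B" and inj: "inj_on f A" using bij by (auto simp: bij_betw_def)
  have cls: "?RB `` {f a} = f ` (?RA `` {a})" if a: "a \<in> A" for a
  proof
    show "?RB `` {f a} \<subseteq> f ` (?RA `` {a})"
    proof
      fix b assume "b \<in> ?RB `` {f a}"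
      moreover then obtain a' where "a' \<in> A" "b = f a'" using fA by auto
      ultimately show "b \<in> f ` (?RA `` {a})" using rel a by auto
    qed
    show "f ` (?RA `` {a}) \<subseteq> ?RB `` {f a}" using rel a fA by auto
  qed
  show ?thesis
  proof (rule bij_betwI')
    fix K1 K2 assume "K1 \<in> A // ?RA" "K2 \<in> A // ?RA"
    then have "K1 \<subseteq> A" "K2 \<subseteq> A" unfolding quotient_def by auto
    then show "(f ` K1 = f ` K2) = (K1 = K2)" using inj by (simp add: inj_on_image_eq_iff)
  next
    fix K assume "K \<in> A // ?RA"
    then obtain a where a: "a \<in> A" "K = ?RA `` {a}" by (rule quotientE)
    then have "f ` K = ?RB `` {f a}" using cls by simp
    moreover have "f a \<in> B" using fA a by auto
    ultimately show "f ` K \<in> B // ?RB" by (simp add: quotientI)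
  next
    fix K' assume "K' \<in> B // ?RB"
    then obtain b where b: "b \<in> B" "K' = ?RB `` {b}" by (rule quotientE)
    then obtain a where a: "a \<in> A" "b = f a" using fA by auto
    then have "K' = f ` (?RA `` {a})" using cls b by simp
    then show "\<exists>K\<in>A // ?RA. K' = f ` K" using a by (auto intro: quotientI)
  qed
qed

lemma sum_quotient_reindex:
  assumes bij: "bij_betw f A B"
    and rel: "\<And>a a'. a \<in> A \<Longrightarrow> a' \<in> A \<Longrightarrow> (f a, f a') \<in> R' \<longleftrightarrow> (a, a') \<in> R"
    and R_refl: "\<And>a. a \<in> A \<Longrightarrow> (a, a) \<in> R"
    and inv: "\<And>a a'. a \<in> A \<Longrightarrow> a' \<in> A \<Longrightarrow> (a, a') \<in> R \<Longrightarrow> g a' = g a"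
    and g': "\<And>a. a \<in> A \<Longrightarrow> g' (f a) = g a"
  shows "(\<Sum>K\<in>B // (R' \<inter> B \<times> B). g' (SOME x. x \<in> K)) = (\<Sum>K\<in>A // (R \<inter> A \<times> A). g (SOME x. x \<in> K))"
proof -
  let ?RA = "R \<inter> A \<times> A" and ?RB = "R' \<inter> B \<times> B"
  have "(\<Sum>K\<in>B // ?RB. g' (SOME x. x \<in> K)) = (\<Sum>K\<in>A // ?RA. g' (SOME x. x \<in> f ` K))"
    by (rule sum.reindex_bij_betw[OF bij_betw_quotient_image[OF bij rel], symmetric])
  also have "\<dots> = (\<Sum>K\<in>A // ?RA. g (SOME x. x \<in> K))"
  proof (rule sum.cong[OF refl])
    fix K assume "K \<in> A // ?RA"
    then obtain a where a: "a \<in> A" "K = ?RA `` {a}" by (rule quotientE)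
    then have "a \<in> K" using R_refl by auto
    then have "(SOME x. x \<in> K) \<in> K" "(SOME x. x \<in> f ` K) \<in> f ` K" by (auto intro: someI)
    then show "g' (SOME x. x \<in> f ` K) = g (SOME x. x \<in> K)" using inv g' a by auto
  qed
  finally show ?thesis .
qed

context broccoli_setting
begin

lemma rB_curves_eq:
  assumes gp: "gen_pos r s \<Delta> F P"
  shows "rB_curves r s \<Delta> F P = (\<lambda>C. (C, slack_orientation r s F C)) ` urB_curves r s \<Delta> F P"
proof
  show "rB_curves r s \<Delta> F P \<subseteq> (\<lambda>C. (C, slack_orientation r s F C)) ` urB_curves r s \<Delta> F P"
    using or_broccoli_unor_broccoli or_broccoli_orientation_unique
    unfolding rB_curves_def urB_curves_def by fastforce
  show "(\<lambda>C. (C, slack_orientation r s F C)) ` urB_curves r s \<Delta> F P \<subseteq> rB_curves r s \<Delta> F P"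
    using or_broccoli_slack_orientation[OF gp] unfolding rB_curves_def urB_curves_def by auto
qed

lemma iso_or_slack_orientation:
  assumes gp: "gen_pos r s \<Delta> F P"
    and C0: "C0 \<in> urB_curves r s \<Delta> F P" and C: "C \<in> urB_curves r s \<Delta> F P"
    and iso: "(C0, C) \<in> iso_un r s \<Delta>"
  shows "((C0, slack_orientation r s F C0), (C, slack_orientation r s F C)) \<in> iso_or r s \<Delta>"
proof -
  obtain \<sigma> where \<sigma>: "curve_iso r s \<Delta> C0 C \<sigma>" using iso unfolding iso_un_def by auto
  have b0: "unor_broccoli r s \<Delta> C0" and b: "unor_broccoli r s \<Delta> C"
    using C0 C unfolding urB_curves_def by auto
  interpret J: curve_isomorphism r s \<Delta> C0 C \<sigma>
    using \<sigma> unor_broccoli_is_curve[OF b0] by unfold_locales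
  have "or_broccoli r s \<Delta> F (C, J.transport (slack_orientation r s F C0))"
    using J.or_broccoli_transport or_broccoli_slack_orientation[OF gp] b0 b unor_broccoli_is_curve
      C0 unfolding urB_curves_def by blast
  then have "J.transport (slack_orientation r s F C0) = slack_orientation r s F C"
    by (rule or_broccoli_orientation_unique)
  then have "\<forall>(u, w)\<in>bE C0. slack_orientation r s F C (\<sigma> u) (\<sigma> w) = slack_orientation r s F C0 u w"
    using J.transport_edge[of _ _ "slack_orientation r s F C0"] by auto
  then show ?thesis using \<sigma> unfolding iso_or_def by auto
qed

end

theorem corollary3p16:
  fixes r s :: nat and \<Delta> :: "(int \<times> int) list" and F :: "nat set" and P :: conds and y :: real
  assumes "\<forall>i < length \<Delta>. \<Delta> ! i \<noteq> (0, 0)"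
    and "F \<subseteq> {..<length \<Delta>}"
    and "r + 2 * s + card F + 1 = length \<Delta>"
    and "gen_pos r s \<Delta> F P"
    and "y > 0" and "y \<noteq> 1"
  shows "N_urB r s y \<Delta> F P = N_rB r s y \<Delta> F P"
proof -
  interpret broccoli_setting r s \<Delta> F using assms(2,3) by unfold_locales
  let ?U = "urB_curves r s \<Delta> F P" and ?f = "\<lambda>C. (C, slack_orientation r s F C)"
  have "(\<Sum>K\<in>rB_curves r s \<Delta> F P // (iso_or r s \<Delta> \<inter> rB_curves r s \<Delta> F P \<times> rB_curves r s \<Delta> F P).
          mult_or r s \<Delta> F y (SOME Co. Co \<in> K))
      = (\<Sum>K\<in>?U // (iso_un r s \<Delta> \<inter> ?U \<times> ?U). mult_un r s \<Delta> F y (SOME C. C \<in> K))"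
  proof (rule sum_quotient_reindex)
    show "bij_betw ?f ?U (rB_curves r s \<Delta> F P)"
      unfolding rB_curves_eq[OF assms(4)] by (rule bij_betw_imageI) (auto simp: inj_on_def)
    show "(?f C, ?f C') \<in> iso_or r s \<Delta> \<longleftrightarrow> (C, C') \<in> iso_un r s \<Delta>" if "C \<in> ?U" "C' \<in> ?U" for C C'
      using iso_or_slack_orientation[OF assms(4) that] unfolding iso_or_def iso_un_def by blast
    show "(C, C) \<in> iso_un r s \<Delta>" for C
      using curve_iso_id unfolding iso_un_def by blast
    show "mult_un r s \<Delta> F y C' = mult_un r s \<Delta> F y C"
      if "C \<in> ?U" "(C, C') \<in> iso_un r s \<Delta>" for C C'
      using mult_un_iso_un that unor_broccoli_is_curve unfolding urB_curves_def by blast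
    show "mult_or r s \<Delta> F y (?f C) = mult_un r s \<Delta> F y C" if "C \<in> ?U" for C
      using mult_or_eq_mult_un or_broccoli_slack_orientation[OF assms(4)] that
      unfolding urB_curves_def by blast
  qed
  then show ?thesis unfolding N_urB_def N_rB_def Let_def by simp
qed

end
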